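(* Let $G=\langle S_k\mid K\rangle$ be a finitely generated semigroup as described in the context with $K$ primitive, and suppose there is $m$ with $m=\sum_{j=1}^kK(s_i,s_j)$ for every $1\le i\le k$. Let $\mathcal{A}$ be a finite alphabet and $X=X_{\mathbf{A}}$ a hom Markov tree shift on $G$. Then the topological entropy exists and \[\lim_{n\to\infty}\frac{\log p_n}{|\Delta_n|}=h^{(s)}(X).\]
   Context: Let $K$ be a $k\times k$ matrix with entries in $\{0,1\}$ indexed by $S_k=\{s_1,\dots,s_k\}$, and let $G=\langle S_k\mid K\rangle$ be the semigroup generated by $S_k$ subject to the relations $s_is_j=1_G$ if and only if $K(s_i,s_j)=0$ ($1_G$ the identity). Every $g\in G$ has a unique minimal representation $g=g_1g_2\cdots g_n$ with $g_l\in S_k$ and $K(g_l,g_{l+1})=1$; its length is $|g|=n$ (with $|1_G|=0$). For $n\ge0$, $\Delta_n=\{h\in G:|h|\le n\}$, and for $g\in G$ the $n$-semiball is $\bar{\Delta}^{(g)}_n=\{gh: h\in G,\ |h|\le n,\ |gh|=|g|+|h|\}$. For a finite alphabet $\mathcal{A}$, a pattern is a map $u:H\to\mathcal{A}$ with $H\subset G$ finite; $u$ is accepted by $t\in\mathcal{A}^G$ if there is $g\in G$ with $t_{gh}=u_h$ for all $h\in H$. For $X\subseteq\mathcal{A}^G$, $p_n$ is the number of patterns $u\in\mathcal{A}^{\Delta_n}$ accepted by some $t\in X$, and $p^{(g)}_n$ the number of patterns $u\in\mathcal{A}^{\bar{\Delta}^{(g)}_n}$ accepted by some $t\in X$. Given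 a $k$-tuple $\mathbf{A}=(A_1,\dots,A_k)$ of $\{0,1\}$-matrices indexed by $\mathcal{A}$, the Markov tree shift is $X_{\mathbf{A}}=\{t\in\mathcal{A}^G: A_i(t_g,t_{gs_i})=1 \text{ for all } g\in G \text{ and } i \text{ with } |gs_i|=|g|+1\}$; it is a hom Markov tree shift if $A_1=A_2=\cdots=A_k$. The $i$th stem entropy is $h^{(s_i)}(X)=\limsup_{n\to\infty}\log p^{(s_i)}_n/|\bar{\Delta}^{(s_i)}_n|$; since $K$ is primitive these coincide, and $h^{(s)}(X)$ denotes their common value. A nonnegative square matrix is primitive if some power has all entries positive. *)

theory Defs
  imports "HOL-Analysis.Analysis" "HOL-Library.FuncSet"
begin

text \<open>Generators s_1..s_k are encoded as indices 0..k-1; the adjacency matrix K is a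
Boolean relation (K i j = True iff K(s_i,s_j) = 1). Elements of G are their unique minimal
representations, i.e. words (lists of generator indices) with K-admissible adjacent letters;
the empty word is the identity 1_G.\<close>

definition sgG :: "nat \<Rightarrow> (nat \<Rightarrow> nat \<Rightarrow> bool) \<Rightarrow> nat list set" where
  "sgG k K = {w. set w \<subseteq> {..<k} \<and> (\<forall>l. Suc l < length w \<longrightarrow> K (w ! l) (w ! Suc l))}"

text \<open>Product in G: concatenate, cancelling s_i s_j = 1 whenever K(s_i,s_j) = 0.\<close>
function sgmult :: "(nat \<Rightarrow> nat \<Rightarrow> bool) \<Rightarrow> nat list \<Rightarrow> nat list \<Rightarrow> nat list" where
  "sgmult K g h =
     (if g = [] \<or> h = [] then g @ h
      else if K (last g) (hd h) then g @ h
      else sgmult K (butlast g) (tl h))"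
  by auto
termination by (relation "Wellfounded.measure (\<lambda>(K, g, h). length h)") auto

definition Delta :: "nat \<Rightarrow> (nat \<Rightarrow> nat \<Rightarrow> bool) \<Rightarrow> nat \<Rightarrow> nat list set" where
  "Delta k K n = {h \<in> sgG k K. length h \<le> n}"

definition semiball :: "nat \<Rightarrow> (nat \<Rightarrow> nat \<Rightarrow> bool) \<Rightarrow> nat list \<Rightarrow> nat \<Rightarrow> nat list set" where
  "semiball k K g n = {sgmult K g h | h. h \<in> sgG k K \<and> length h \<le> n \<and>
                        length (sgmult K g h) = length g + length h}"

fun kpow :: "nat \<Rightarrow> (nat \<Rightarrow> nat \<Rightarrow> bool) \<Rightarrow> nat \<Rightarrow> nat \<Rightarrow> nat \<Rightarrow> nat" where
  "kpow k K 0 i j = (if i = j then 1 else 0)"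
| "kpow k K (Suc n) i j = (\<Sum>l<k. kpow k K n i l * (if K l j then 1 else 0))"

definition primitive_mat :: "nat \<Rightarrow> (nat \<Rightarrow> nat \<Rightarrow> bool) \<Rightarrow> bool" where
  "primitive_mat k K \<longleftrightarrow> (\<exists>N>0. \<forall>i<k. \<forall>j<k. kpow k K N i j > 0)"

text \<open>Markov tree shift X_A for a k-tuple of 0/1 matrices over the alphabet 'a
(A i x y = True iff A_{i+1}(x,y) = 1).\<close>
definition markov_tree_shift ::
  "nat \<Rightarrow> (nat \<Rightarrow> nat \<Rightarrow> bool) \<Rightarrow> (nat \<Rightarrow> 'a \<Rightarrow> 'a \<Rightarrow> bool) \<Rightarrow> (nat list \<Rightarrow> 'a) set" where
  "markov_tree_shift k K A = {t. \<forall>g \<in> sgG k K. \<forall>i<k.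
      length (sgmult K g [i]) = length g + 1 \<longrightarrow> A i (t g) (t (sgmult K g [i]))}"

definition accepted_patterns ::
  "nat \<Rightarrow> (nat \<Rightarrow> nat \<Rightarrow> bool) \<Rightarrow> (nat list \<Rightarrow> 'a) set \<Rightarrow> nat list set \<Rightarrow> (nat list \<Rightarrow> 'a) set" where
  "accepted_patterns k K X H =
     {u. \<exists>t \<in> X. \<exists>g \<in> sgG k K. u = restrict (\<lambda>h. t (sgmult K g h)) H}"

definition pn :: "nat \<Rightarrow> (nat \<Rightarrow> nat \<Rightarrow> bool) \<Rightarrow> (nat list \<Rightarrow> 'a) set \<Rightarrow> nat \<Rightarrow> nat" where
  "pn k K X n = card (accepted_patterns k K X (Delta k K n))"

definition pn_semi :: "nat \<Rightarrow> (nat \<Rightarrow> nat \<Rightarrow> bool) \<Rightarrow> (nat list \<Rightarrow> 'a) set \<Rightarrow> nat list \<Rightarrow> nat \<Rightarrow> nat" where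
  "pn_semi k K X g n = card (accepted_patterns k K X (semiball k K g n))"

definition stem_entropy :: "nat \<Rightarrow> (nat \<Rightarrow> nat \<Rightarrow> bool) \<Rightarrow> (nat list \<Rightarrow> 'a) set \<Rightarrow> nat list \<Rightarrow> ereal" where
  "stem_entropy k K X g =
     limsup (\<lambda>n. ereal (ln (real (pn_semi k K X g n)) / real (card (semiball k K g n))))"

end

(*
  Every letter has exactly m admissible successors, so a semiball is an m-ary tree, and a
  ball consists of the root together with k such trees and a smaller ball around the parent
  vertex.  Let M d be the largest number of admissible labellings of the m-ary tree of depth d
  whose root symbol lies in the stable set of symbols that can be reached after arbitrarily
  many steps.  Grafting m such trees below a common predecessor gives M d ^ m <= M (d + 1), so
  ln (M d) / m ^ d increases to a limit mu.  The number of semiball patterns lies between M n and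
  exp (mu m ^ n + O(n)), the number of ball patterns between M n ^ k and exp (k mu m ^ n + O(n)),
  and the sizes of the two sets are asymptotically m ^ (n + 1) / (m - 1) and k times that.  Hence
  both normalised logarithms tend to mu (m - 1) / m.  For m = 1 primitivity forces k = 1, the
  semigroup is the natural numbers, and the limit exists by Fekete's lemma.
*)
theory Submission
  imports Defs
begin

declare sgmult.simps[simp del]

lemma sgG_Nil [simp]: "[] \<in> sgG k K"
  by (simp add: sgG_def)

lemma sgG_Cons: "x # y \<in> sgG k K \<longleftrightarrow> x < k \<and> y \<in> sgG k K \<and> (y = [] \<or> K x (hd y))"
  by (cases y) (auto simp: sgG_def nth_Cons' less_Suc_eq_0_disj)

lemma sgG_append:
  "w @ y \<in> sgG k K \<longleftrightarrow> w \<in> sgG k K \<and> y \<in> sgG k K \<and> (w = [] \<or> y = [] \<or> K (last w) (hd y))"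
proof (induction w)
  case (Cons a w)
  then show ?case
    by (cases "w = []") (cases y; auto simp: sgG_Cons)+
qed simp

lemma sgG_snoc: "w @ [x] \<in> sgG k K \<longleftrightarrow> w \<in> sgG k K \<and> x < k \<and> (w = [] \<or> K (last w) x)"
  by (auto simp: sgG_append sgG_Cons)

lemma sgG_butlast: "w \<in> sgG k K \<Longrightarrow> butlast w \<in> sgG k K"
  by (metis append_butlast_last_id butlast.simps(1) sgG_append)

lemma sgG_last: "w \<in> sgG k K \<Longrightarrow> w \<noteq> [] \<Longrightarrow> last w < k"
  by (metis append_butlast_last_id sgG_snoc)

lemma sgG_hd: "w \<in> sgG k K \<Longrightarrow> w \<noteq> [] \<Longrightarrow> hd w < k"
  by (cases w) (auto simp: sgG_Cons)

lemma sgmult_Nil_left [simp]: "sgmult K [] h = h"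
  by (simp add: sgmult.simps)

lemma sgmult_Nil_right [simp]: "sgmult K g [] = g"
  by (simp add: sgmult.simps)

lemma sgmult_Cons:
  "g \<noteq> [] \<Longrightarrow> sgmult K g (x # y) = (if K (last g) x then g @ x # y else sgmult K (butlast g) y)"
  by (simp add: sgmult.simps)

lemma sgmult_reduced: "g = [] \<or> h = [] \<or> K (last g) (hd h) \<Longrightarrow> sgmult K g h = g @ h"
  by (cases "g = []"; cases h) (auto simp: sgmult_Cons)

lemma sgmult_closed: "g \<in> sgG k K \<Longrightarrow> h \<in> sgG k K \<Longrightarrow> sgmult K g h \<in> sgG k K"
proof (induction h arbitrary: g)
  case (Cons x y)
  then show ?case
    by (cases "g = []") (auto simp: sgmult_Cons sgG_append sgG_Cons sgG_butlast)
qed simp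

lemma sgmult_Cons_assoc:
  "y = [] \<or> K i (hd y) \<Longrightarrow> sgmult K g (i # y) = sgmult K (sgmult K g [i]) y"
  by (cases "g = []"; cases y) (auto simp: sgmult_Cons)

lemma length_sgmult_single:
  "length (sgmult K g [i]) = length g + 1 \<longleftrightarrow> g = [] \<or> K (last g) i"
  by (cases "g = []") (auto simp: sgmult_Cons)

lemma markov_tree_shift_iff:
  "t \<in> markov_tree_shift k K A \<longleftrightarrow>
     (\<forall>g \<in> sgG k K. \<forall>i<k. (g = [] \<or> K (last g) i) \<longrightarrow> A i (t g) (t (g @ [i])))"
  unfolding markov_tree_shift_def length_sgmult_single
  by (auto simp: sgmult_reduced)

lemma markov_tree_shift_hom:
  assumes "\<forall>i<k. A i = A 0"
  shows "markov_tree_shift k K A = markov_tree_shift k K (\<lambda>_. A 0)"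
  using assms unfolding markov_tree_shift_def by (metis (no_types, lifting))

lemma finite_accepted_patterns:
  "finite H \<Longrightarrow> finite (accepted_patterns k K (X :: (nat list \<Rightarrow> 'a::finite) set) H)"
  by (rule finite_subset[of _ "H \<rightarrow>\<^sub>E (UNIV :: 'a set)"])
    (auto simp: accepted_patterns_def intro: finite_PiE)

lemma card_accepted_patterns_Un_le:
  fixes X :: "(nat list \<Rightarrow> 'a::finite) set"
  assumes "finite H1" "finite H2"
  shows "card (accepted_patterns k K X (H1 \<union> H2))
    \<le> card (accepted_patterns k K X H1) * card (accepted_patterns k K X H2)"
proof -
  let ?split = "\<lambda>u. (restrict u H1, restrict u H2)"
  have inj: "inj_on ?split (accepted_patterns k K X (H1 \<union> H2))"
  proof (rule inj_onI)
    fix u v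
    assume "u \<in> accepted_patterns k K X (H1 \<union> H2)" "v \<in> accepted_patterns k K X (H1 \<union> H2)"
      and eq: "?split u = ?split v"
    then have "u \<in> extensional (H1 \<union> H2)" "v \<in> extensional (H1 \<union> H2)"
      by (auto simp: accepted_patterns_def)
    then show "u = v"
    proof (rule extensionalityI)
      fix x
      assume "x \<in> H1 \<union> H2"
      moreover have "restrict u H1 = restrict v H1" "restrict u H2 = restrict v H2"
        using eq by simp_all
      ultimately show "u x = v x"
        by (auto dest!: fun_cong[of _ _ x])
    qed
  qed
  have sub: "?split ` accepted_patterns k K X (H1 \<union> H2)
      \<subseteq> accepted_patterns k K X H1 \<times> accepted_patterns k K X H2"
  proof (rule image_subsetI)
    fix u
    assume "u \<in> accepted_patterns k K X (H1 \<union> H2)"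
    then obtain t g where "t \<in> X" "g \<in> sgG k K" and u: "u = restrict (\<lambda>h. t (sgmult K g h)) (H1 \<union> H2)"
      by (auto simp: accepted_patterns_def)
    moreover have "restrict u H1 = restrict (\<lambda>h. t (sgmult K g h)) H1"
      and "restrict u H2 = restrict (\<lambda>h. t (sgmult K g h)) H2"
      using u by (auto simp: fun_eq_iff)
    ultimately show "?split u \<in> accepted_patterns k K X H1 \<times> accepted_patterns k K X H2"
      unfolding accepted_patterns_def by auto
  qed
  have "card (accepted_patterns k K X (H1 \<union> H2))
      \<le> card (accepted_patterns k K X H1 \<times> accepted_patterns k K X H2)"
    using assms by (intro card_inj_on_le[OF inj sub] finite_cartesian_product finite_accepted_patterns)
  then show ?thesis
    by (simp add: card_cartesian_product)
qed

lemma card_accepted_patterns_translate_le: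
  fixes X :: "(nat list \<Rightarrow> 'a::finite) set"
  assumes H: "finite H" and w: "w \<in> sgG k K"
    and assoc: "\<And>g h. g \<in> sgG k K \<Longrightarrow> h \<in> H \<Longrightarrow> sgmult K g (w @ h) = sgmult K (sgmult K g w) h"
  shows "card (accepted_patterns k K X ((@) w ` H)) \<le> card (accepted_patterns k K X H)"
proof -
  let ?lift = "\<lambda>u. restrict (\<lambda>h. u (drop (length w) h)) ((@) w ` H)"
  have sub: "accepted_patterns k K X ((@) w ` H) \<subseteq> ?lift ` accepted_patterns k K X H"
  proof
    fix u
    assume "u \<in> accepted_patterns k K X ((@) w ` H)"
    then obtain t g where t: "t \<in> X" and g: "g \<in> sgG k K"
      and u: "u = restrict (\<lambda>h. t (sgmult K g h)) ((@) w ` H)"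
      by (auto simp: accepted_patterns_def)
    let ?v = "restrict (\<lambda>h. t (sgmult K (sgmult K g w) h)) H"
    have "?v \<in> accepted_patterns k K X H"
      using t sgmult_closed[OF g w] unfolding accepted_patterns_def by blast
    moreover have "u x = ?lift ?v x" for x
    proof (cases "x \<in> (@) w ` H")
      case True
      then obtain h where "h \<in> H" "x = w @ h"
        by blast
      then show ?thesis
        using u assoc[OF g \<open>h \<in> H\<close>] by simp
    qed (simp add: u)
    ultimately show "u \<in> ?lift ` accepted_patterns k K X H"
      by blast
  qed
  have "card (accepted_patterns k K X ((@) w ` H)) \<le> card (?lift ` accepted_patterns k K X H)"
    by (rule card_mono[OF finite_imageI[OF finite_accepted_patterns[OF H]] sub])
  also have "\<dots> \<le> card (accepted_patterns k K X H)"
    using finite_accepted_patterns[OF H] by (rule card_image_le)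
  finally show ?thesis .
qed

lemma kpow_row_sum:
  assumes rowsum: "\<forall>i<k. card {j. j < k \<and> K i j} = m" and i: "i < k"
  shows "(\<Sum>j<k. kpow k K n i j) = m ^ n"
proof (induction n)
  case 0
  then show ?case using i by (simp add: sum.delta)
next
  case (Suc n)
  have row: "(\<Sum>j<k. if K l j then 1 else 0) = m" if "l < k" for l
    using rowsum that by (simp add: sum.If_cases Int_def conj_commute)
  have "(\<Sum>j<k. kpow k K (Suc n) i j) = (\<Sum>j<k. \<Sum>l<k. kpow k K n i l * (if K l j then 1 else 0))"
    by simp
  also have "\<dots> = (\<Sum>l<k. kpow k K n i l * (\<Sum>j<k. if K l j then 1 else 0))"
    by (subst sum.swap) (simp add: sum_distrib_left)
  also have "\<dots> = (\<Sum>l<k. kpow k K n i l) * m"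
    by (simp add: row sum_distrib_right)
  finally show ?case using Suc by simp
qed

lemma primitive_row_sum_pos:
  assumes prim: "primitive_mat k K" and rowsum: "\<forall>i<k. card {j. j < k \<and> K i j} = m" and "0 < k"
  shows "0 < m"
proof -
  obtain N where N: "0 < N" "\<forall>i<k. \<forall>j<k. kpow k K N i j > 0"
    using prim by (auto simp: primitive_mat_def)
  have "0 < kpow k K N 0 0"
    using N(2) \<open>0 < k\<close> by blast
  also have "\<dots> \<le> (\<Sum>j<k. kpow k K N 0 j)"
    using \<open>0 < k\<close> by (intro member_le_sum) auto
  also have "\<dots> = m ^ N"
    by (rule kpow_row_sum[OF rowsum \<open>0 < k\<close>])
  finally show ?thesis
    using N(1) by (simp add: nat_zero_less_power_iff)
qed

lemma primitive_row_sum_one: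
  assumes prim: "primitive_mat k K" and rowsum: "\<forall>i<k. card {j. j < k \<and> K i j} = 1" and "0 < k"
  shows "k = 1"
proof -
  obtain N where "\<forall>i<k. \<forall>j<k. kpow k K N i j > 0"
    using prim by (auto simp: primitive_mat_def)
  then have "(\<Sum>j<k. 1) \<le> (\<Sum>j<k. kpow k K N 0 j)"
    using \<open>0 < k\<close> by (intro sum_mono) (simp add: Suc_le_eq)
  also have "\<dots> = 1"
    using kpow_row_sum[OF rowsum \<open>0 < k\<close>] by simp
  finally show ?thesis
    using \<open>0 < k\<close> by simp
qed

lemma subadditive_le_mult:
  fixes c :: "nat \<Rightarrow> real"
  assumes sub: "\<And>a b. c (a + b) \<le> c a + c b"
  shows "c (q * N + r) \<le> real q * c N + c r"
proof (induction q)
  case (Suc q)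
  have "c (Suc q * N + r) \<le> c N + c (q * N + r)"
    using sub[of N "q * N + r"] by (simp add: add.assoc)
  then show ?case using Suc by (simp add: algebra_simps)
qed simp

lemma subadditive_quotient_le:
  fixes c :: "nat \<Rightarrow> real"
  assumes sub: "\<And>a b. c (a + b) \<le> c a + c b" and nonneg: "\<And>n. 0 \<le> c n"
    and "1 \<le> N" "1 \<le> n"
  shows "c n / real n \<le> c N / real N + Max (c ` {..<N}) / real n"
proof -
  have "c (n mod N) \<le> Max (c ` {..<N})"
    using \<open>1 \<le> N\<close> by (intro Max_ge) auto
  then have "c n \<le> real (n div N) * c N + Max (c ` {..<N})"
    using subadditive_le_mult[OF sub, of "n div N" N "n mod N"] by simp
  also have "real (n div N) * c N \<le> real n * (c N / real N)"
  proof -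
    have "real (n div N) * real N \<le> real n"
      by (metis div_times_less_eq_dividend of_nat_le_iff of_nat_mult)
    then have "(real (n div N) * real N) * (c N / real N) \<le> real n * (c N / real N)"
      using nonneg[of N] by (intro mult_right_mono) auto
    then show ?thesis
      using \<open>1 \<le> N\<close> by simp
  qed
  finally show ?thesis
    using \<open>1 \<le> n\<close> by (simp add: field_simps)
qed

lemma fekete:
  fixes c :: "nat \<Rightarrow> real"
  assumes sub: "\<And>a b. c (a + b) \<le> c a + c b" and nonneg: "\<And>n. 0 \<le> c n"
  shows "(\<lambda>n. c n / real n) \<longlonglongrightarrow> (INF n\<in>{1..}. c n / real n)"
proof (rule order_tendstoI)
  let ?L = "INF n\<in>{1..}. c n / real n"
  have bdd: "bdd_below ((\<lambda>n. c n / real n) ` {1..})"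
    using nonneg by (intro bdd_belowI2[of _ 0]) auto
  {
    fix a
    assume "a < ?L"
    moreover have "?L \<le> c n / real n" if "1 \<le> n" for n
      using that by (intro cINF_lower[OF bdd]) auto
    ultimately show "\<forall>\<^sub>F n in sequentially. a < c n / real n"
      by (intro eventually_sequentiallyI[of 1]) (auto intro: less_le_trans)
  next
    fix a
    assume "?L < a"
    then obtain N where N: "1 \<le> N" "c N / real N < (?L + a) / 2"
      using cINF_less_iff[OF _ bdd, of "(?L + a) / 2"] by auto
    have "\<forall>\<^sub>F n in sequentially. Max (c ` {..<N}) / real n < (a - ?L) / 2"
      using \<open>?L < a\<close> by (intro order_tendstoD(2)[OF lim_const_over_n]) simp
    then show "\<forall>\<^sub>F n in sequentially. c n / real n < a"
    proof (rule eventually_mono[OF eventually_conj[OF _ eventually_ge_at_top[of 1]]])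
      fix n :: nat
      assume n: "Max (c ` {..<N}) / real n < (a - ?L) / 2 \<and> 1 \<le> n"
      then have "c n / real n \<le> c N / real N + Max (c ` {..<N}) / real n"
        using subadditive_quotient_le[OF sub nonneg N(1)] by blast
      then show "c n / real n < a"
        using N(2) n by argo
    qed
  }
qed

lemma tendsto_ratio_exponential:
  fixes f g l :: "nat \<Rightarrow> real" and b c \<alpha> \<beta> \<gamma> :: real
  assumes b: "1 < b" and l: "l \<longlonglongrightarrow> c" and lower: "\<And>n. l n \<le> f n / b ^ n"
    and upper: "\<forall>\<^sub>F n in sequentially. f n \<le> c * b ^ n + \<alpha> * real n + \<beta>"
    and g: "(\<lambda>n. g n / b ^ n) \<longlonglongrightarrow> \<gamma>" and "\<gamma> \<noteq> 0"
  shows "(\<lambda>n. f n / g n) \<longlonglongrightarrow> c / \<gamma>"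
proof -
  let ?u = "\<lambda>n. c + \<alpha> * (real n / b ^ n) + \<beta> * inverse (b ^ n)"
  have "(\<lambda>n. real n / b ^ n) \<longlonglongrightarrow> 0"
    using b lim_n_over_pown[of b] by simp
  then have "?u \<longlonglongrightarrow> c + \<alpha> * 0 + \<beta> * 0"
    using LIMSEQ_inverse_realpow_zero[OF b] by (intro tendsto_intros)
  then have u: "?u \<longlonglongrightarrow> c"
    by simp
  have "\<forall>\<^sub>F n in sequentially. l n \<le> f n / b ^ n"
    using lower by simp
  moreover have "\<forall>\<^sub>F n in sequentially. f n / b ^ n \<le> ?u n"
    using upper
  proof (rule eventually_mono)
    fix n
    assume "f n \<le> c * b ^ n + \<alpha> * real n + \<beta>"
    then have "f n / b ^ n \<le> (c * b ^ n + \<alpha> * real n + \<beta>) / b ^ n"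
      using b by (simp add: divide_right_mono)
    also have "\<dots> = ?u n"
      using b by (simp add: field_simps)
    finally show "f n / b ^ n \<le> ?u n" .
  qed
  ultimately have "(\<lambda>n. f n / b ^ n) \<longlonglongrightarrow> c"
    by (rule tendsto_sandwich[OF _ _ l u])
  then have "(\<lambda>n. (f n / b ^ n) / (g n / b ^ n)) \<longlonglongrightarrow> c / \<gamma>"
    using g \<open>\<gamma> \<noteq> 0\<close> by (rule tendsto_divide)
  moreover have "(\<lambda>n. (f n / b ^ n) / (g n / b ^ n)) = (\<lambda>n. f n / g n)"
    using b by (simp add: divide_divide_eq_left divide_divide_eq_right)
  ultimately show ?thesis
    by simp
qed

lemma geometric_sum_over_power:
  fixes m :: nat
  assumes "2 \<le> m"
  shows "(\<lambda>n. real (\<Sum>e\<le>n. m ^ e) / real m ^ n) \<longlonglongrightarrow> real m / (real m - 1)"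
proof -
  have "real (\<Sum>e\<le>n. m ^ e) / real m ^ n = (real m - inverse (real m ^ n)) / (real m - 1)" for n
    using assms by (simp add: sum_gp0 field_simps)
  moreover have "(\<lambda>n. (real m - inverse (real m ^ n)) / (real m - 1)) \<longlonglongrightarrow> (real m - 0) / (real m - 1)"
    using assms by (intro tendsto_intros LIMSEQ_inverse_realpow_zero) auto
  ultimately show ?thesis by simp
qed

lemma tendsto_imp_limsup_eq:
  fixes P Q :: "nat \<Rightarrow> real"
  assumes "P \<longlonglongrightarrow> L" "Q \<longlonglongrightarrow> L"
  shows "(\<lambda>n. ereal (P n)) \<longlonglongrightarrow> limsup (\<lambda>n. ereal (Q n))"
proof -
  have "limsup (\<lambda>n. ereal (Q n)) = ereal L"
    using assms(2) by (intro lim_imp_Limsup tendsto_ereal) simp_all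
  then show ?thesis
    using assms(1) by (simp add: tendsto_ereal)
qed

section \<open>Labellings of the \<open>m\<close>-ary tree\<close>

locale hom_tree_shift =
  fixes k :: nat and K :: "nat \<Rightarrow> nat \<Rightarrow> bool" and m :: nat and A :: "'a::finite \<Rightarrow> 'a \<Rightarrow> bool"
  assumes k_pos: "0 < k"
    and row_sum: "\<And>i. i < k \<Longrightarrow> card {j. j < k \<and> K i j} = m"
    and m_pos: "0 < m"
begin

definition children :: "nat \<Rightarrow> nat set" where
  "children c = {j. j < k \<and> K c j}"

definition X :: "(nat list \<Rightarrow> 'a) set" where
  "X = markov_tree_shift k K (\<lambda>_. A)"

definition extendable :: "'a set" where
  "extendable = {x. \<exists>p. p 0 = x \<and> (\<forall>n. A (p n) (p (Suc n)))}"

definition path_from :: "'a \<Rightarrow> nat \<Rightarrow> 'a" where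
  "path_from x = (SOME p. p 0 = x \<and> (\<forall>n. A (p n) (p (Suc n))))"

definition mtree :: "nat \<Rightarrow> nat list set" where
  "mtree d = {z. set z \<subseteq> {..<m} \<and> length z \<le> d}"

definition labellings :: "nat \<Rightarrow> 'a \<Rightarrow> (nat list \<Rightarrow> 'a) set" where
  "labellings d y = {u \<in> mtree d \<rightarrow>\<^sub>E UNIV. u [] = y \<and> (\<forall>z\<in>mtree d. u z \<in> extendable) \<and>
     (\<forall>z r. z @ [r] \<in> mtree d \<longrightarrow> A (u z) (u (z @ [r])))}"

definition extend_labelling :: "nat \<Rightarrow> (nat list \<Rightarrow> 'a) \<Rightarrow> nat list \<Rightarrow> 'a" where
  "extend_labelling d u z =
     (if length z \<le> d then u z else path_from (u (take d z)) (length z - d))"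

lemma card_children: "c < k \<Longrightarrow> card (children c) = m"
  using row_sum by (simp add: children_def)

lemma finite_children: "finite (children c)"
  by (simp add: children_def)

lemma children_lessThan: "children c \<subseteq> {..<k}"
  by (auto simp: children_def)

lemma children_nonempty: "c < k \<Longrightarrow> children c \<noteq> {}"
  using card_children m_pos by fastforce

lemma path_from:
  assumes "x \<in> extendable"
  shows "path_from x 0 = x" and "A (path_from x n) (path_from x (Suc n))"
proof -
  have "\<exists>p. p 0 = x \<and> (\<forall>n. A (p n) (p (Suc n)))"
    using assms by (simp add: extendable_def)
  then have "path_from x 0 = x \<and> (\<forall>n. A (path_from x n) (path_from x (Suc n)))"
    unfolding path_from_def by (rule someI_ex)
  then show "path_from x 0 = x" and "A (path_from x n) (path_from x (Suc n))"
    by blast+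
qed

lemma path_from_extendable:
  assumes "x \<in> extendable"
  shows "path_from x n \<in> extendable"
  unfolding extendable_def mem_Collect_eq
  by (rule exI[where x = "\<lambda>j. path_from x (j + n)"]) (simp add: path_from[OF assms])

lemma finite_mtree: "finite (mtree d)"
  unfolding mtree_def using finite_lists_length_le[of "{..<m}" d] by simp

lemma Nil_in_mtree [simp]: "[] \<in> mtree d"
  by (simp add: mtree_def)

lemma Cons_in_mtree_Suc: "r # z \<in> mtree (Suc d) \<longleftrightarrow> r < m \<and> z \<in> mtree d"
  by (auto simp: mtree_def)

lemma snoc_in_mtree: "z @ [r] \<in> mtree d \<longleftrightarrow> z \<in> mtree d \<and> r < m \<and> length z < d"
  by (auto simp: mtree_def)

lemma card_mtree: "card (mtree d) = (\<Sum>e\<le>d. m ^ e)"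
  unfolding mtree_def using card_lists_length_le[of "{..<m}" d] by simp

lemma labellings_extensional: "u \<in> labellings d y \<Longrightarrow> u \<in> extensional (mtree d)"
  by (simp add: labellings_def PiE_def)

lemma finite_labellings: "finite (labellings d y)"
  by (rule finite_subset[of _ "mtree d \<rightarrow>\<^sub>E (UNIV :: 'a set)"])
    (auto simp: labellings_def finite_mtree intro: finite_PiE)

lemma path_labelling:
  assumes "y \<in> extendable"
  shows "restrict (\<lambda>z. path_from y (length z)) (mtree d) \<in> labellings d y"
  using assms by (auto simp: labellings_def path_from path_from_extendable snoc_in_mtree)

lemma card_labellings_pos: "y \<in> extendable \<Longrightarrow> 0 < card (labellings d y)"
  using path_labelling finite_labellings card_gt_0_iff by blast

lemma card_labellings_0:
  assumes "y \<in> extendable"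
  shows "card (labellings 0 y) = 1"
proof -
  have "mtree 0 = {[]}"
    by (auto simp: mtree_def)
  then have "labellings 0 y \<subseteq> {restrict (\<lambda>z. y) {[]}}"
    by (auto simp: labellings_def PiE_def extensional_def fun_eq_iff)
  then have "card (labellings 0 y) \<le> 1"
    by (metis card.empty card.insert card_mono empty_iff finite.emptyI finite.insertI One_nat_def)
  then show ?thesis
    using card_labellings_pos[OF assms, of 0] by simp
qed

text \<open>A labelling of depth \<open>d + 1\<close> is the same as its root label together with \<open>m\<close> labellings
  of depth \<open>d\<close> hanging below it.\<close>

definition subtrees :: "nat \<Rightarrow> (nat list \<Rightarrow> 'a) \<Rightarrow> nat \<Rightarrow> nat list \<Rightarrow> 'a" where
  "subtrees d u = (\<lambda>r\<in>{..<m}. restrict (\<lambda>z. u (r # z)) (mtree d))"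

definition graft :: "nat \<Rightarrow> 'a \<Rightarrow> (nat \<Rightarrow> nat list \<Rightarrow> 'a) \<Rightarrow> nat list \<Rightarrow> 'a" where
  "graft d x fam = restrict (\<lambda>z. if z = [] then x else fam (hd z) (tl z)) (mtree (Suc d))"

lemma subtrees_labellings:
  assumes u: "u \<in> labellings (Suc d) x"
  shows "subtrees d u \<in> {..<m} \<rightarrow>\<^sub>E (\<Union>y\<in>{y \<in> extendable. A x y}. labellings d y)"
proof -
  have ext: "\<And>z. z \<in> mtree (Suc d) \<Longrightarrow> u z \<in> extendable"
    and edge: "\<And>z r. z @ [r] \<in> mtree (Suc d) \<Longrightarrow> A (u z) (u (z @ [r]))"
    and root: "u [] = x"
    using u by (auto simp: labellings_def)
  have "subtrees d u r \<in> labellings d (u [r])" if "r < m" for r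
    unfolding labellings_def
  proof (intro CollectI conjI ballI allI impI)
    fix z
    assume "z \<in> mtree d"
    then show "subtrees d u r z \<in> extendable"
      using ext[of "r # z"] that by (simp add: subtrees_def Cons_in_mtree_Suc)
  next
    fix z r'
    assume "z @ [r'] \<in> mtree d"
    then show "A (subtrees d u r z) (subtrees d u r (z @ [r']))"
      using edge[of "r # z" r'] that by (simp add: subtrees_def snoc_in_mtree Cons_in_mtree_Suc)
  next
    show "subtrees d u r \<in> mtree d \<rightarrow>\<^sub>E UNIV"
      using that by (simp add: subtrees_def)
    show "subtrees d u r [] = u [r]"
      using that by (simp add: subtrees_def)
  qed
  moreover have "u [r] \<in> extendable \<and> A x (u [r])" if "r < m" for r
    using ext[of "[r]"] edge[of "[]" r] root that by (simp add: mtree_def)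
  ultimately show ?thesis
    by (intro PiE_I) (auto simp: subtrees_def)
qed

lemma graft_labellings:
  assumes "x \<in> extendable" and fam: "fam \<in> {..<m} \<rightarrow>\<^sub>E (\<Union>y\<in>{y \<in> extendable. A x y}. labellings d y)"
  shows "graft d x fam \<in> labellings (Suc d) x"
proof -
  have fam_r: "\<exists>y. fam r \<in> labellings d y \<and> A x y" if "r < m" for r
    using fam that by blast
  show ?thesis
    unfolding labellings_def
  proof (intro CollectI conjI ballI allI impI)
    fix z
    assume "z \<in> mtree (Suc d)"
    then show "graft d x fam z \<in> extendable"
      using assms(1) fam_r by (cases z) (auto simp: graft_def labellings_def Cons_in_mtree_Suc)
  next
    fix z r
    assume zr: "z @ [r] \<in> mtree (Suc d)"
    show "A (graft d x fam z) (graft d x fam (z @ [r]))"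
    proof (cases z)
      case Nil
      then show ?thesis
        using zr fam_r[of r] by (auto simp: graft_def labellings_def mtree_def)
    next
      case (Cons c z')
      then show ?thesis
        using zr fam_r[of c] by (auto simp: graft_def labellings_def snoc_in_mtree Cons_in_mtree_Suc)
    qed
  qed (simp_all add: graft_def)
qed

lemma card_labellings_Suc:
  assumes "x \<in> extendable"
  shows "card (labellings (Suc d) x) = card (\<Union>y\<in>{y \<in> extendable. A x y}. labellings d y) ^ m"
proof -
  let ?U = "\<Union>y\<in>{y \<in> extendable. A x y}. labellings d y"
  have "bij_betw (subtrees d) (labellings (Suc d) x) ({..<m} \<rightarrow>\<^sub>E ?U)"
  proof (rule bij_betw_byWitness[where f' = "graft d x"])
    show "\<forall>u\<in>labellings (Suc d) x. graft d x (subtrees d u) = u"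
      by (auto simp: graft_def subtrees_def labellings_def PiE_def extensional_def fun_eq_iff
          Cons_in_mtree_Suc neq_Nil_conv)
    show "\<forall>fam\<in>{..<m} \<rightarrow>\<^sub>E ?U. subtrees d (graft d x fam) = fam"
    proof
      fix fam
      assume fam: "fam \<in> {..<m} \<rightarrow>\<^sub>E ?U"
      show "subtrees d (graft d x fam) = fam"
      proof (rule PiE_ext[OF subtrees_labellings[OF graft_labellings[OF assms fam]] fam])
        fix r
        assume "r \<in> {..<m}"
        moreover have "fam r \<in> extensional (mtree d)"
          using fam calculation labellings_extensional by blast
        ultimately show "subtrees d (graft d x fam) r = fam r"
          by (auto simp: subtrees_def graft_def Cons_in_mtree_Suc extensional_def)
      qed
    qed
    show "subtrees d ` labellings (Suc d) x \<subseteq> {..<m} \<rightarrow>\<^sub>E ?U"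
      using subtrees_labellings by blast
    show "graft d x ` ({..<m} \<rightarrow>\<^sub>E ?U) \<subseteq> labellings (Suc d) x"
      using graft_labellings[OF assms] by blast
  qed
  then show ?thesis
    by (simp add: bij_betw_same_card card_PiE)
qed

lemma extend_labelling_Nil [simp]: "extend_labelling d u [] = u []"
  by (simp add: extend_labelling_def)

lemma extend_labelling_edge:
  assumes u: "u \<in> labellings d y" and z: "set z \<subseteq> {..<m}" and r: "r < m"
  shows "A (extend_labelling d u z) (extend_labelling d u (z @ [r]))"
proof -
  have ext: "\<And>z. z \<in> mtree d \<Longrightarrow> u z \<in> extendable"
    and edge: "\<And>z r. z @ [r] \<in> mtree d \<Longrightarrow> A (u z) (u (z @ [r]))"
    using u by (auto simp: labellings_def)
  consider "length z < d" | "length z = d" | "length z > d"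
    by linarith
  then show ?thesis
  proof cases
    case 1
    then show ?thesis
      using edge[of z r] z r by (simp add: extend_labelling_def mtree_def)
  next
    case 2
    then have uz: "u z \<in> extendable"
      using ext z by (simp add: mtree_def)
    have "A (u z) (path_from (u z) (Suc 0))"
      using path_from(1)[OF uz] path_from(2)[OF uz, of 0] by simp
    then show ?thesis
      using 2 by (simp add: extend_labelling_def)
  next
    case 3
    have "take d z \<in> mtree d"
      using z by (auto simp: mtree_def dest: in_set_takeD)
    then have "u (take d z) \<in> extendable"
      by (rule ext)
    moreover have "length z + 1 - d = Suc (length z - d)"
      using 3 by simp
    ultimately show ?thesis
      using 3 path_from(2)[of "u (take d z)" "length z - d"] by (simp add: extend_labelling_def)
  qed
qed

text \<open>The reduced words continuing a letter \<open>c\<close> form an \<open>m\<close>-ary tree: each letter has exactly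
  \<open>m\<close> admissible successors, enumerated by \<open>child_enum\<close>.\<close>

definition child_enum :: "nat \<Rightarrow> nat \<Rightarrow> nat" where
  "child_enum c = (SOME h. bij_betw h {..<m} (children c))"

definition child_index :: "nat \<Rightarrow> nat \<Rightarrow> nat" where
  "child_index c = inv_into {..<m} (child_enum c)"

fun word_of_path :: "nat \<Rightarrow> nat list \<Rightarrow> nat list" where
  "word_of_path c [] = []"
| "word_of_path c (r # z) = child_enum c r # word_of_path (child_enum c r) z"

fun path_of_word :: "nat \<Rightarrow> nat list \<Rightarrow> nat list" where
  "path_of_word c [] = []"
| "path_of_word c (x # y) = child_index c x # path_of_word x y"

fun follows :: "nat \<Rightarrow> nat list \<Rightarrow> bool" where
  "follows c [] = True"
| "follows c (x # y) = (x \<in> children c \<and> follows x y)"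

definition words_from :: "nat set \<Rightarrow> nat \<Rightarrow> nat list set" where
  "words_from J d = {y \<in> sgG k K. length y \<le> d \<and> (y = [] \<or> hd y \<in> J)}"

lemma child_enum_bij: "c < k \<Longrightarrow> bij_betw (child_enum c) {..<m} (children c)"
proof -
  assume "c < k"
  obtain h where "bij_betw h {0..<card (children c)} (children c)"
    using ex_bij_betw_nat_finite[OF finite_children] by blast
  then have "\<exists>h. bij_betw h {..<m} (children c)"
    using card_children[OF \<open>c < k\<close>] by (auto simp: atLeast0LessThan)
  then show ?thesis
    unfolding child_enum_def by (rule someI_ex)
qed

lemma child_enum_in: "c < k \<Longrightarrow> r < m \<Longrightarrow> child_enum c r \<in> children c"
  using child_enum_bij bij_betwE by blast

lemma child_index_lt: "c < k \<Longrightarrow> x \<in> children c \<Longrightarrow> child_index c x < m"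
  unfolding child_index_def using child_enum_bij bij_betw_inv_into bij_betwE by blast

lemma child_enum_index: "c < k \<Longrightarrow> x \<in> children c \<Longrightarrow> child_enum c (child_index c x) = x"
  unfolding child_index_def using child_enum_bij bij_betw_inv_into_right by fastforce

lemma child_index_enum: "c < k \<Longrightarrow> r < m \<Longrightarrow> child_index c (child_enum c r) = r"
  unfolding child_index_def using child_enum_bij bij_betw_inv_into_left by fastforce

lemma follows_iff: "c < k \<Longrightarrow> follows c y \<longleftrightarrow> y \<in> sgG k K \<and> (y = [] \<or> hd y \<in> children c)"
proof (induction y arbitrary: c)
  case (Cons x y)
  then show ?case
    using sgG_hd[of y] by (cases y) (auto simp: sgG_Cons children_def)
qed simp

lemma length_word_of_path [simp]: "length (word_of_path c z) = length z"
  by (induction z arbitrary: c) auto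

lemma word_of_path_snoc:
  "word_of_path c (z @ [r]) = word_of_path c z @ [child_enum (last (c # word_of_path c z)) r]"
  by (induction z arbitrary: c) auto

lemma path_of_word_snoc:
  "path_of_word c (y @ [x]) = path_of_word c y @ [child_index (last (c # y)) x]"
  by (induction y arbitrary: c) auto

lemma follows_word_of_path: "c < k \<Longrightarrow> set z \<subseteq> {..<m} \<Longrightarrow> follows c (word_of_path c z)"
proof (induction z arbitrary: c)
  case (Cons r z)
  then have "child_enum c r \<in> children c"
    by (simp add: child_enum_in)
  with Cons show ?case
    using children_lessThan by auto
qed simp

lemma path_of_word_of_path: "c < k \<Longrightarrow> set z \<subseteq> {..<m} \<Longrightarrow> path_of_word c (word_of_path c z) = z"
proof (induction z arbitrary: c)
  case (Cons r z)
  then have "child_enum c r \<in> children c"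
    by (simp add: child_enum_in)
  with Cons show ?case
    using children_lessThan by (auto simp: child_index_enum)
qed simp

lemma word_of_path_of_word:
  "c < k \<Longrightarrow> follows c y \<Longrightarrow>
     word_of_path c (path_of_word c y) = y \<and> set (path_of_word c y) \<subseteq> {..<m} \<and>
     length (path_of_word c y) = length y"
proof (induction y arbitrary: c)
  case (Cons x y)
  then have "x < k"
    using children_lessThan by auto
  with Cons show ?case
    by (auto simp: child_enum_index child_index_lt)
qed simp

lemma words_from_children: "c < k \<Longrightarrow> y \<in> words_from (children c) d \<longleftrightarrow> follows c y \<and> length y \<le> d"
  unfolding words_from_def using follows_iff by auto

lemma bij_betw_word_of_path:
  assumes "c < k"
  shows "bij_betw (word_of_path c) (mtree d) (words_from (children c) d)"
proof (rule bij_betw_byWitness[where f' = "path_of_word c"])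
  show "\<forall>z\<in>mtree d. path_of_word c (word_of_path c z) = z"
    using path_of_word_of_path[OF assms] by (simp add: mtree_def)
  show "\<forall>y\<in>words_from (children c) d. word_of_path c (path_of_word c y) = y"
    using word_of_path_of_word[OF assms] words_from_children[OF assms] by blast
  show "word_of_path c ` mtree d \<subseteq> words_from (children c) d"
    using follows_word_of_path[OF assms] words_from_children[OF assms] by (auto simp: mtree_def)
  show "path_of_word c ` words_from (children c) d \<subseteq> mtree d"
    using word_of_path_of_word[OF assms] words_from_children[OF assms] by (auto simp: mtree_def)
qed

lemma card_words_from_children: "c < k \<Longrightarrow> card (words_from (children c) d) = (\<Sum>e\<le>d. m ^ e)"
  using bij_betw_word_of_path bij_betw_same_card card_mtree by metis

lemma finite_words_from: "finite (words_from J d)"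
  by (rule finite_subset[of _ "{y. set y \<subseteq> {..<k} \<and> length y \<le> d}"])
    (auto simp: words_from_def sgG_def intro: finite_lists_length_le)

lemma words_from_0: "words_from J 0 = {[]}"
  by (auto simp: words_from_def)

lemma X_iff:
  "t \<in> X \<longleftrightarrow> (\<forall>g \<in> sgG k K. \<forall>i<k. (g = [] \<or> K (last g) i) \<longrightarrow> A (t g) (t (g @ [i])))"
  unfolding X_def markov_tree_shift_iff by simp

lemma successor_exists: "v \<in> sgG k K \<Longrightarrow> \<exists>x. x < k \<and> (v = [] \<or> K (last v) x)"
  using k_pos children_nonempty[of "last v"] sgG_last[of v]
  by (cases "v = []") (auto simp: children_def)

lemma label_extendable:
  assumes t: "t \<in> X" and v: "v \<in> sgG k K"
  shows "t v \<in> extendable"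
proof -
  define next_word where "next_word w = w @ [SOME x. x < k \<and> (w = [] \<or> K (last w) x)]" for w
  have next_word: "\<exists>x. next_word w = w @ [x] \<and> x < k \<and> (w = [] \<or> K (last w) x)"
    if "w \<in> sgG k K" for w
    unfolding next_word_def using someI_ex[OF successor_exists[OF that]] by blast
  have walk: "(next_word ^^ n) v \<in> sgG k K" for n
  proof (induction n)
    case (Suc n)
    obtain x where "next_word ((next_word ^^ n) v) = (next_word ^^ n) v @ [x]" and
      "x < k" and "(next_word ^^ n) v = [] \<or> K (last ((next_word ^^ n) v)) x"
      using next_word[OF Suc] by blast
    then show ?case
      using Suc by (simp add: sgG_snoc)
  qed (simp add: v)
  have "A (t ((next_word ^^ n) v)) (t ((next_word ^^ Suc n) v))" for n
    using next_word[OF walk[of n]] t walk[of n] unfolding X_iff by auto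
  then show ?thesis
    unfolding extendable_def by (intro CollectI exI[of _ "\<lambda>n. t ((next_word ^^ n) v)"]) auto
qed

definition glued_config :: "'a \<Rightarrow> nat \<Rightarrow> (nat \<Rightarrow> nat list \<Rightarrow> 'a) \<Rightarrow> nat list \<Rightarrow> 'a" where
  "glued_config x0 d fam v =
     (if v = [] then x0 else extend_labelling d (fam (hd v)) (path_of_word (hd v) (tl v)))"

lemma glued_config_in_X:
  assumes fam: "\<And>c. c < k \<Longrightarrow> \<exists>y. fam c \<in> labellings d y \<and> A x0 y"
  shows "glued_config x0 d fam \<in> X"
  unfolding X_iff
proof (intro ballI allI impI)
  fix g i
  assume g: "g \<in> sgG k K" and i: "i < k" and gi: "g = [] \<or> K (last g) i"
  show "A (glued_config x0 d fam g) (glued_config x0 d fam (g @ [i]))"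
  proof (cases g)
    case Nil
    obtain y where "fam i \<in> labellings d y" "A x0 y"
      using fam[OF i] by blast
    then show ?thesis
      using Nil by (simp add: glued_config_def labellings_def)
  next
    case (Cons c y)
    have c: "c < k" and follows: "follows c y"
      using g Cons follows_iff[of c y] sgG_hd[of y] by (auto simp: sgG_Cons children_def)
    have "last (c # y) < k"
      using g Cons sgG_last by fastforce
    moreover have "i \<in> children (last (c # y))"
      using gi Cons i by (auto simp: children_def)
    ultimately have "child_index (last (c # y)) i < m"
      by (rule child_index_lt)
    moreover obtain y0 where "fam c \<in> labellings d y0"
      using fam[OF c] by blast
    ultimately show ?thesis
      using Cons extend_labelling_edge word_of_path_of_word[OF c follows]
      by (simp add: glued_config_def path_of_word_snoc)
  qed
qed

lemma glued_config_word_of_path: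
  "c < k \<Longrightarrow> z \<in> mtree d \<Longrightarrow> glued_config x0 d fam (c # word_of_path c z) = fam c z"
  by (simp add: glued_config_def extend_labelling_def mtree_def path_of_word_of_path)

lemma glued_pattern_accepted:
  assumes "\<And>c. c < k \<Longrightarrow> \<exists>y. fam c \<in> labellings d y \<and> A x0 y"
  shows "restrict (glued_config x0 d fam) H \<in> accepted_patterns k K X H"
proof -
  have "glued_config x0 d fam \<in> X"
    using assms by (rule glued_config_in_X)
  then show ?thesis
    unfolding accepted_patterns_def
    by (intro CollectI bexI[of _ "glued_config x0 d fam"] bexI[of _ "[]"]) auto
qed

lemma glued_config_inj:
  assumes "c < k" and "fam c \<in> labellings d y" and "fam' c \<in> labellings d y'"
    and eq: "\<And>z. z \<in> mtree d \<Longrightarrow>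
      glued_config x0 d fam (c # word_of_path c z) = glued_config x0' d fam' (c # word_of_path c z)"
  shows "fam c = fam' c"
  using labellings_extensional[OF assms(2)] labellings_extensional[OF assms(3)]
proof (rule extensionalityI)
  fix z
  assume "z \<in> mtree d"
  then show "fam c z = fam' c z"
    using eq[OF \<open>z \<in> mtree d\<close>] by (simp add: glued_config_word_of_path[OF \<open>c < k\<close> \<open>z \<in> mtree d\<close>])
qed

definition forward_patterns :: "nat \<Rightarrow> nat \<Rightarrow> (nat list \<Rightarrow> 'a) set" where
  "forward_patterns c d = {restrict (\<lambda>y. t (w @ y)) (words_from (children c) d) | t w.
     t \<in> X \<and> w \<in> sgG k K \<and> w \<noteq> [] \<and> last w = c}"

lemma finite_forward_patterns: "finite (forward_patterns c d)"
  by (rule finite_subset[of _ "words_from (children c) d \<rightarrow>\<^sub>E (UNIV :: 'a set)"])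
    (auto simp: forward_patterns_def finite_words_from intro: finite_PiE)

lemma forward_pattern_labelling:
  assumes c: "c < k" and t: "t \<in> X" and w: "w \<in> sgG k K" "w \<noteq> []" "last w = c"
  shows "restrict (\<lambda>z. t (w @ word_of_path c z)) (mtree d) \<in> labellings d (t w)"
proof -
  have word: "w @ word_of_path c z \<in> sgG k K" if "set z \<subseteq> {..<m}" for z
    using follows_word_of_path[OF c that] follows_iff[OF c] w by (auto simp: sgG_append children_def)
  show ?thesis
    unfolding labellings_def
  proof (intro CollectI conjI ballI allI impI)
    fix z
    assume "z \<in> mtree d"
    then show "restrict (\<lambda>z. t (w @ word_of_path c z)) (mtree d) z \<in> extendable"
      using label_extendable[OF t word] by (simp add: mtree_def)
  next
    fix z r
    assume zr: "z @ [r] \<in> mtree d"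
    let ?x = "child_enum (last (c # word_of_path c z)) r"
    have "last (c # word_of_path c z) < k"
      using follows_word_of_path[OF c, of z] follows_iff[OF c] zr sgG_last c
      by (cases "word_of_path c z = []") (auto simp: mtree_def)
    then have "?x \<in> children (last (w @ word_of_path c z))"
      using zr w child_enum_in by (cases "word_of_path c z = []") (auto simp: mtree_def)
    then have "A (t (w @ word_of_path c z)) (t ((w @ word_of_path c z) @ [?x]))"
      using t word[of z] zr unfolding X_iff by (auto simp: children_def mtree_def)
    then show "A (restrict (\<lambda>z. t (w @ word_of_path c z)) (mtree d) z)
        (restrict (\<lambda>z. t (w @ word_of_path c z)) (mtree d) (z @ [r]))"
      using zr by (simp add: word_of_path_snoc snoc_in_mtree)
  qed (use w in simp_all)
qed

lemma card_forward_patterns_le: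
  assumes c: "c < k"
  shows "card (forward_patterns c d) \<le> (\<Sum>y\<in>extendable. card (labellings d y))"
proof -
  define pull where "pull u = restrict (\<lambda>z. u (word_of_path c z)) (mtree d)" for u :: "nat list \<Rightarrow> 'a"
  have "pull ` forward_patterns c d \<subseteq> (\<Union>y\<in>extendable. labellings d y)"
  proof
    fix v
    assume "v \<in> pull ` forward_patterns c d"
    then obtain t w where tw: "t \<in> X" "w \<in> sgG k K" "w \<noteq> []" "last w = c"
      and v: "v = pull (restrict (\<lambda>y. t (w @ y)) (words_from (children c) d))"
      unfolding forward_patterns_def by blast
    have "v = restrict (\<lambda>z. t (w @ word_of_path c z)) (mtree d)"
      using v bij_betwE[OF bij_betw_word_of_path[OF c]] by (auto simp: pull_def)
    then show "v \<in> (\<Union>y\<in>extendable. labellings d y)"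
      using forward_pattern_labelling[OF c tw] label_extendable[OF tw(1,2)] by blast
  qed
  moreover have "inj_on pull (forward_patterns c d)"
  proof (rule inj_onI)
    fix u u'
    assume u: "u \<in> forward_patterns c d" and u': "u' \<in> forward_patterns c d"
      and eq: "pull u = pull u'"
    have "u \<in> extensional (words_from (children c) d)" "u' \<in> extensional (words_from (children c) d)"
      using u u' by (auto simp: forward_patterns_def)
    then show "u = u'"
    proof (rule extensionalityI)
      fix y
      assume "y \<in> words_from (children c) d"
      then obtain z where "z \<in> mtree d" "y = word_of_path c z"
        using bij_betw_imp_surj_on[OF bij_betw_word_of_path[OF c]] by blast
      then show "u y = u' y"
        using eq by (metis pull_def restrict_apply')
    qed
  qed
  ultimately have "card (forward_patterns c d) \<le> card (\<Union>y\<in>extendable. labellings d y)"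
    by (metis card_inj_on_le finite_UN_I finite finite_labellings)
  also have "\<dots> \<le> (\<Sum>y\<in>extendable. card (labellings d y))"
    by (rule card_UN_le) simp
  finally show ?thesis .
qed

section \<open>Counting patterns on balls\<close>

text \<open>A pattern seen at \<open>v\<close> on the words of length at most \<open>d + 1\<close> starting in \<open>J\<close> is determined
  by the label of \<open>v\<close>, the forward patterns along the letters \<open>j \<in> J\<close> that extend \<open>v\<close>, and a
  pattern of depth \<open>d\<close> seen at \<open>butlast v\<close>: for every other letter \<open>j\<close> the product \<open>v (j # y)\<close>
  cancels down to \<open>butlast v y\<close>.\<close>

definition forward_letters :: "nat list \<Rightarrow> nat set" where
  "forward_letters v = (if v = [] then {..<k} else children (last v))"

definition back_letters :: "nat set \<Rightarrow> nat set \<Rightarrow> nat set" where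
  "back_letters J S = {x. x < k \<and> (\<exists>j\<in>J - S. K j x)}"

definition forward_letter_sets :: "nat set set" where
  "forward_letter_sets = insert {..<k} (children ` {..<k})"

definition assemble ::
  "nat set \<Rightarrow> nat \<Rightarrow> nat set \<Rightarrow> 'a \<times> (nat \<Rightarrow> nat list \<Rightarrow> 'a) \<times> (nat list \<Rightarrow> 'a) \<Rightarrow> nat list \<Rightarrow> 'a"
where
  "assemble J d S = (\<lambda>(a, fam, u'). restrict
     (\<lambda>y. if y = [] then a else if hd y \<in> S then fam (hd y) (tl y) else u' (tl y)) (words_from J (Suc d)))"

definition assembly_domain ::
  "nat set \<Rightarrow> nat \<Rightarrow> nat set \<Rightarrow> ('a \<times> (nat \<Rightarrow> nat list \<Rightarrow> 'a) \<times> (nat list \<Rightarrow> 'a)) set"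
where
  "assembly_domain J d S = UNIV \<times> PiE (J \<inter> S) (\<lambda>j. forward_patterns j d) \<times>
     accepted_patterns k K X (words_from (back_letters J S) d)"

lemma finite_assembly_domain: "J \<subseteq> {..<k} \<Longrightarrow> finite (assembly_domain J d S)"
  unfolding assembly_domain_def using finite_subset[of "J \<inter> S" "{..<k}"]
  by (intro finite_cartesian_product finite_PiE finite_accepted_patterns finite_words_from
      finite_forward_patterns) auto

lemma card_forward_letter_sets: "card forward_letter_sets \<le> k + 1"
  unfolding forward_letter_sets_def
  using card_insert_le_m1[of "Suc k" "children ` {..<k}" "{..<k}"] card_image_le[of "{..<k}" children]
  by simp

lemma card_back_letters: "J \<subseteq> {..<k} \<Longrightarrow> card (back_letters J S) \<le> m * card (J - S)"
proof -
  assume J: "J \<subseteq> {..<k}"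
  then have fin: "finite (J - S)"
    using finite_subset by blast
  have "back_letters J S \<subseteq> (\<Union>j\<in>J - S. children j)"
    by (auto simp: back_letters_def children_def)
  then have "card (back_letters J S) \<le> card (\<Union>j\<in>J - S. children j)"
    using fin by (intro card_mono) (auto simp: finite_children)
  also have "\<dots> \<le> (\<Sum>j\<in>J - S. card (children j))"
    using fin by (rule card_UN_le)
  also have "\<dots> = m * card (J - S)"
    using J card_children by (simp add: subset_iff)
  finally show ?thesis .
qed

lemma forward_letter_Cons:
  assumes "j \<in> forward_letters v" and "j # y \<in> words_from J (Suc d)"
  shows "sgmult K v (j # y) = v @ [j] @ y" and "y \<in> words_from (children j) d"
proof -
  have "v = [] \<or> K (last v) j"
    using assms(1) by (auto simp: forward_letters_def children_def split: if_splits)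
  then show "sgmult K v (j # y) = v @ [j] @ y"
    by (simp add: sgmult_reduced)
  show "y \<in> words_from (children j) d"
    using assms(2) sgG_hd[of y] by (auto simp: words_from_def sgG_Cons children_def)
qed

lemma back_letter_Cons:
  assumes "j \<notin> forward_letters v" and "j # y \<in> words_from J (Suc d)"
  shows "sgmult K v (j # y) = sgmult K (butlast v) y"
    and "y \<in> words_from (back_letters J (forward_letters v)) d"
proof -
  have "j < k"
    using assms(2) by (auto simp: words_from_def sgG_Cons)
  then have "v \<noteq> []" "\<not> K (last v) j"
    using assms(1) by (auto simp: forward_letters_def children_def split: if_splits)
  then show "sgmult K v (j # y) = sgmult K (butlast v) y"
    by (simp add: sgmult_Cons)
  show "y \<in> words_from (back_letters J (forward_letters v)) d"
    using assms sgG_hd[of y] by (auto simp: words_from_def sgG_Cons back_letters_def)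
qed

lemma forward_pattern_at:
  assumes "t \<in> X" and "v @ [j] \<in> sgG k K"
  shows "restrict (\<lambda>y. t (v @ [j] @ y)) (words_from (children j) d) \<in> forward_patterns j d"
  unfolding forward_patterns_def using assms
  by (intro CollectI exI[of _ t] exI[of _ "v @ [j]"]) auto

lemma patterns_words_from_Suc_subset:
  "accepted_patterns k K X (words_from J (Suc d)) \<subseteq>
     (\<Union>S\<in>forward_letter_sets. assemble J d S ` assembly_domain J d S)"
proof
  fix u
  assume "u \<in> accepted_patterns k K X (words_from J (Suc d))"
  then obtain t v where tv: "t \<in> X" "v \<in> sgG k K"
    and u: "u = restrict (\<lambda>h. t (sgmult K v h)) (words_from J (Suc d))"
    by (auto simp: accepted_patterns_def)
  let ?S = "forward_letters v"
  define fam where "fam = (\<lambda>j\<in>J \<inter> ?S. restrict (\<lambda>y. t (v @ [j] @ y)) (words_from (children j) d))"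
  define u' where "u' = restrict (\<lambda>h. t (sgmult K (butlast v) h)) (words_from (back_letters J ?S) d)"
  have "v @ [j] \<in> sgG k K" if "j \<in> ?S" for j
    using that tv(2) by (auto simp: sgG_snoc forward_letters_def children_def split: if_splits)
  then have "fam \<in> PiE (J \<inter> ?S) (\<lambda>j. forward_patterns j d)"
    using forward_pattern_at[OF tv(1)] by (auto simp: fam_def)
  moreover have "u' \<in> accepted_patterns k K X (words_from (back_letters J ?S) d)"
    unfolding u'_def accepted_patterns_def using tv sgG_butlast by blast
  ultimately have "(t v, fam, u') \<in> assembly_domain J d ?S"
    unfolding assembly_domain_def by simp
  moreover have "t (sgmult K v y) = (if y = [] then t v else if hd y \<in> ?S then fam (hd y) (tl y) else u' (tl y))"
    if "y \<in> words_from J (Suc d)" for y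
    using that forward_letter_Cons[of _ v _ J d] back_letter_Cons[of _ v _ J d]
    by (cases y) (auto simp: fam_def u'_def words_from_def)
  then have "u = assemble J d ?S (t v, fam, u')"
    unfolding assemble_def u by (auto simp: fun_eq_iff)
  moreover have "?S \<in> forward_letter_sets"
    using tv(2) sgG_last by (auto simp: forward_letters_def forward_letter_sets_def)
  ultimately show "u \<in> (\<Union>S\<in>forward_letter_sets. assemble J d S ` assembly_domain J d S)"
    by blast
qed

lemma card_patterns_words_from_0: "card (accepted_patterns k K X (words_from J 0)) \<le> CARD('a)"
proof -
  have "accepted_patterns k K X (words_from J 0) \<subseteq> (\<lambda>a. restrict (\<lambda>_. a) {[]}) ` UNIV"
    by (auto simp: accepted_patterns_def words_from_0 fun_eq_iff)
  then show ?thesis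
    by (metis card_image_le card_mono finite finite_imageI order_trans)
qed

lemma power_card_back_letters_le:
  fixes G :: "nat \<Rightarrow> real"
  assumes G_ge_1: "\<And>d. 1 \<le> G d" and G_pow: "G d ^ m \<le> \<Gamma> * G (Suc d)" and "1 \<le> \<Gamma>"
    and J: "J \<subseteq> {..<k}"
  shows "G d ^ card (back_letters J S) \<le> \<Gamma> ^ k * G (Suc d) ^ card (J - S)"
proof -
  have "card (J - S) \<le> k"
    using J card_mono[of "{..<k}" "J - S"] by auto
  have "G d ^ card (back_letters J S) \<le> G d ^ (m * card (J - S))"
    using card_back_letters[OF J] G_ge_1 by (rule power_increasing)
  also have "\<dots> \<le> (\<Gamma> * G (Suc d)) ^ card (J - S)"
    unfolding power_mult using G_pow G_ge_1[of d] by (intro power_mono) auto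
  also have "\<dots> \<le> \<Gamma> ^ k * G (Suc d) ^ card (J - S)"
    unfolding power_mult_distrib using \<open>card (J - S) \<le> k\<close> \<open>1 \<le> \<Gamma>\<close> G_ge_1[of "Suc d"]
    by (intro mult_right_mono power_increasing) auto
  finally show ?thesis .
qed

lemma card_assembled_le:
  fixes G :: "nat \<Rightarrow> real" and \<Gamma> \<Lambda> :: real
  assumes fwd: "\<And>c. c < k \<Longrightarrow> real (card (forward_patterns c d)) \<le> G (Suc d)"
    and G_ge_1: "\<And>d. 1 \<le> G d" and G_pow: "G d ^ m \<le> \<Gamma> * G (Suc d)" and "1 \<le> \<Gamma>" and "0 \<le> \<Lambda>"
    and J: "J \<subseteq> {..<k}"
    and back_bound: "real (card (accepted_patterns k K X (words_from (back_letters J S) d)))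
      \<le> \<Lambda> ^ d * CARD('a) * G d ^ card (back_letters J S)"
  shows "real (card (assemble J d S ` assembly_domain J d S))
    \<le> CARD('a) * (\<Lambda> ^ d * CARD('a) * \<Gamma> ^ k) * G (Suc d) ^ card J"
proof -
  let ?p = "card (J \<inter> S)" and ?r = "card (J - S)" and ?B = "back_letters J S"
  have finJ: "finite J"
    using J finite_subset by blast
  have card_split: "?p + ?r = card J"
    using card_Int_Diff[OF finJ, of S] by simp
  have "G d ^ card ?B \<le> \<Gamma> ^ k * G (Suc d) ^ ?r"
    by (rule power_card_back_letters_le[OF G_ge_1 G_pow \<open>1 \<le> \<Gamma>\<close> J])
  then have "\<Lambda> ^ d * CARD('a) * G d ^ card ?B \<le> \<Lambda> ^ d * CARD('a) * (\<Gamma> ^ k * G (Suc d) ^ ?r)"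
    using \<open>0 \<le> \<Lambda>\<close> by (intro mult_left_mono) auto
  then have back_le: "real (card (accepted_patterns k K X (words_from ?B d)))
      \<le> \<Lambda> ^ d * CARD('a) * (\<Gamma> ^ k * G (Suc d) ^ ?r)"
    using back_bound by linarith
  have fwd_prod: "(\<Prod>j\<in>J \<inter> S. real (card (forward_patterns j d))) \<le> G (Suc d) ^ ?p"
    using prod_mono[of "J \<inter> S" "\<lambda>j. real (card (forward_patterns j d))" "\<lambda>_. G (Suc d)"] fwd J
    by auto
  have "0 \<le> G (Suc d) ^ ?p"
    using G_ge_1[of "Suc d"] by simp
  have "real (card (assemble J d S ` assembly_domain J d S)) \<le> real (card (assembly_domain J d S))"
    using card_image_le[OF finite_assembly_domain[OF J]] by simp
  also have "\<dots> = CARD('a) * ((\<Prod>j\<in>J \<inter> S. real (card (forward_patterns j d))) *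
      real (card (accepted_patterns k K X (words_from ?B d))))"
    by (simp add: assembly_domain_def card_cartesian_product card_PiE finJ)
  also have "\<dots> \<le> CARD('a) * (G (Suc d) ^ ?p * (\<Lambda> ^ d * CARD('a) * (\<Gamma> ^ k * G (Suc d) ^ ?r)))"
    by (rule mult_left_mono[OF mult_mono[OF fwd_prod back_le \<open>0 \<le> G (Suc d) ^ ?p\<close>]]) simp_all
  also have "\<dots> = CARD('a) * (\<Lambda> ^ d * CARD('a) * \<Gamma> ^ k) * (G (Suc d) ^ ?p * G (Suc d) ^ ?r)"
    by (simp add: algebra_simps)
  finally show ?thesis
    by (simp add: card_split flip: power_add)
qed

lemma card_patterns_words_from_le:
  fixes G :: "nat \<Rightarrow> real" and \<Gamma> :: real
  assumes fwd: "\<And>c d. c < k \<Longrightarrow> real (card (forward_patterns c d)) \<le> G (Suc d)"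
    and G_ge_1: "\<And>d. 1 \<le> G d" and G_pow: "\<And>d. G d ^ m \<le> \<Gamma> * G (Suc d)" and "1 \<le> \<Gamma>"
    and "J \<subseteq> {..<k}"
  shows "real (card (accepted_patterns k K X (words_from J d)))
    \<le> (real (k + 1) * CARD('a) * \<Gamma> ^ k) ^ d * CARD('a) * G d ^ card J"
  using \<open>J \<subseteq> {..<k}\<close>
proof (induction d arbitrary: J)
  case 0
  have "real (card (accepted_patterns k K X (words_from J 0))) \<le> CARD('a)"
    using card_patterns_words_from_0[of J] by simp
  also have "\<dots> \<le> CARD('a) * G 0 ^ card J"
    using G_ge_1[of 0] by (simp add: one_le_power)
  finally show ?case
    by simp
next
  case (Suc d)
  let ?\<Lambda> = "real (k + 1) * CARD('a) * \<Gamma> ^ k"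
  let ?bound = "CARD('a) * (?\<Lambda> ^ d * CARD('a) * \<Gamma> ^ k) * G (Suc d) ^ card J"
  have "0 \<le> ?\<Lambda>"
    using \<open>1 \<le> \<Gamma>\<close> by simp
  have back_sub: "back_letters J S \<subseteq> {..<k}" for S
    by (auto simp: back_letters_def)
  have each: "real (card (assemble J d S ` assembly_domain J d S)) \<le> ?bound" for S
    using card_assembled_le[OF fwd G_ge_1 G_pow \<open>1 \<le> \<Gamma>\<close> \<open>0 \<le> ?\<Lambda>\<close> Suc.prems Suc.IH[OF back_sub]] .
  have "card (accepted_patterns k K X (words_from J (Suc d)))
      \<le> card (\<Union>S\<in>forward_letter_sets. assemble J d S ` assembly_domain J d S)"
    by (rule card_mono[OF _ patterns_words_from_Suc_subset])
      (auto simp: forward_letter_sets_def intro: finite_assembly_domain[OF Suc.prems])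
  also have "\<dots> \<le> (\<Sum>S\<in>forward_letter_sets. card (assemble J d S ` assembly_domain J d S))"
    by (rule card_UN_le) (simp add: forward_letter_sets_def)
  finally have "real (card (accepted_patterns k K X (words_from J (Suc d))))
      \<le> (\<Sum>S\<in>forward_letter_sets. real (card (assemble J d S ` assembly_domain J d S)))"
    by (simp only: of_nat_le_iff of_nat_sum[symmetric])
  also have "\<dots> \<le> real (card forward_letter_sets) * ?bound"
    by (rule sum_bounded_above) (rule each)
  also have "\<dots> \<le> real (k + 1) * ?bound"
  proof (rule mult_right_mono)
    show "real (card forward_letter_sets) \<le> real (k + 1)"
      using card_forward_letter_sets by simp
    show "0 \<le> ?bound"
      using \<open>0 \<le> ?\<Lambda>\<close> \<open>1 \<le> \<Gamma>\<close> G_ge_1[of "Suc d"] by simp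
  qed
  also have "\<dots> = ?\<Lambda> ^ Suc d * CARD('a) * G (Suc d) ^ card J"
    by (simp add: algebra_simps)
  finally show ?case .
qed

lemma Delta_eq_words_from: "Delta k K n = words_from {..<k} n"
  unfolding Delta_def words_from_def using sgG_hd by auto

lemma semiball_eq:
  assumes i: "i < k"
  shows "semiball k K [i] n = Cons i ` words_from (children i) n"
proof
  show "semiball k K [i] n \<subseteq> Cons i ` words_from (children i) n"
  proof
    fix x
    assume "x \<in> semiball k K [i] n"
    then obtain h where h: "x = sgmult K [i] h" "h \<in> sgG k K" "length h \<le> n"
      "length (sgmult K [i] h) = Suc (length h)"
      unfolding semiball_def by auto
    have "h = [] \<or> K i (hd h)"
      using h(4) by (cases h) (auto simp: sgmult_Cons split: if_splits)
    then have "x = i # h"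
      using h(1) sgmult_reduced[of "[i]" h K] by simp
    moreover have "h \<in> words_from (children i) n"
      using h \<open>h = [] \<or> K i (hd h)\<close> sgG_hd by (auto simp: words_from_def children_def)
    ultimately show "x \<in> Cons i ` words_from (children i) n"
      by blast
  qed
next
  show "Cons i ` words_from (children i) n \<subseteq> semiball k K [i] n"
  proof
    fix x
    assume "x \<in> Cons i ` words_from (children i) n"
    then obtain h where h: "x = i # h" "h \<in> words_from (children i) n"
      by blast
    then have "sgmult K [i] h = i # h"
      by (intro trans[OF sgmult_reduced]) (auto simp: words_from_def children_def)
    then show "x \<in> semiball k K [i] n"
      using h unfolding semiball_def words_from_def
      by (intro CollectI exI[of _ h]) auto
  qed
qed

lemma card_semiball: "i < k \<Longrightarrow> card (semiball k K [i] n) = (\<Sum>e\<le>n. m ^ e)"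
  by (simp add: semiball_eq card_image card_words_from_children)

lemma finite_semiball: "i < k \<Longrightarrow> finite (semiball k K [i] n)"
  by (simp add: semiball_eq finite_words_from)

lemma Delta_Suc: "Delta k K (Suc n) = insert [] (\<Union>c<k. Cons c ` words_from (children c) n)"
proof (rule set_eqI)
  fix y
  show "y \<in> Delta k K (Suc n) \<longleftrightarrow> y \<in> insert [] (\<Union>c<k. Cons c ` words_from (children c) n)"
  proof (cases y)
    case (Cons c y')
    have "y' \<in> sgG k K \<Longrightarrow> y' \<noteq> [] \<Longrightarrow> hd y' < k"
      by (rule sgG_hd)
    then show ?thesis
      using Cons by (auto simp: Delta_def words_from_def sgG_Cons children_def)
  qed (simp add: Delta_def)
qed

lemma card_Delta_Suc: "card (Delta k K (Suc n)) = 1 + k * (\<Sum>e\<le>n. m ^ e)"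
proof -
  have "card (\<Union>c<k. Cons c ` words_from (children c) n) = (\<Sum>c<k. card (Cons c ` words_from (children c) n))"
    by (rule card_UN_disjoint) (auto intro: finite_words_from)
  also have "\<dots> = k * (\<Sum>e\<le>n. m ^ e)"
    by (simp add: card_image card_words_from_children)
  finally show ?thesis
    unfolding Delta_Suc by (simp add: finite_words_from card_insert_if image_iff)
qed

lemma card_patterns_semiball_le:
  assumes i: "i < k"
  shows "card (accepted_patterns k K X (semiball k K [i] n))
    \<le> card (accepted_patterns k K X (words_from (children i) n))"
proof -
  have semiball: "semiball k K [i] n = (@) [i] ` words_from (children i) n"
    unfolding semiball_eq[OF i] by auto
  have assoc: "sgmult K g ([i] @ h) = sgmult K (sgmult K g [i]) h"
    if "h \<in> words_from (children i) n" for g h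
  proof -
    have "h = [] \<or> K i (hd h)"
      using that by (auto simp: words_from_def children_def)
    then show ?thesis
      unfolding append_Cons append_Nil by (rule sgmult_Cons_assoc)
  qed
  have "[i] \<in> sgG k K"
    using i by (simp add: sgG_Cons)
  then show ?thesis
    unfolding semiball by (rule card_accepted_patterns_translate_le[OF finite_words_from _ assoc])
qed


end

section \<open>Maximal numbers of labellings\<close>

locale nonempty_hom_tree_shift = hom_tree_shift +
  assumes X_nonempty: "markov_tree_shift k K (\<lambda>_. A) \<noteq> {}"
begin

lemma extendable_nonempty: "extendable \<noteq> {}"
  using X_nonempty label_extendable[OF _ sgG_Nil] unfolding X_def by blast

primrec reachable :: "nat \<Rightarrow> 'a set" where
  "reachable 0 = extendable"
| "reachable (Suc j) = {y \<in> extendable. \<exists>x\<in>reachable j. A x y}"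

definition max_labellings :: "nat \<Rightarrow> nat \<Rightarrow> nat" where
  "max_labellings j d = Max ((\<lambda>y. card (labellings d y)) ` reachable j)"

primrec mpow_sum :: "nat \<Rightarrow> nat" where
  "mpow_sum 0 = 0"
| "mpow_sum (Suc r) = m + m * mpow_sum r"

lemma mpow_sum_mono: "i \<le> j \<Longrightarrow> mpow_sum i \<le> mpow_sum j"
proof (induction j)
  case (Suc j)
  show ?case
  proof (cases "i = Suc j")
    case False
    then have "mpow_sum i \<le> mpow_sum j"
      using Suc by simp
    also have "\<dots> \<le> m * mpow_sum j"
      using m_pos by simp
    finally show ?thesis
      by simp
  qed simp
qed simp

lemma reachable_subset: "reachable j \<subseteq> extendable"
  by (cases j) auto

lemma reachable_Suc_subset: "reachable (Suc j) \<subseteq> reachable j"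
  by (induction j) auto

lemma reachable_nonempty: "reachable j \<noteq> {}"
proof -
  obtain x where x: "x \<in> extendable"
    using extendable_nonempty by blast
  have "path_from x j \<in> reachable j"
    by (induction j) (use x path_from_extendable[OF x] path_from[OF x] in auto)
  then show ?thesis
    by blast
qed

lemma max_labellings_ge: "y \<in> reachable j \<Longrightarrow> card (labellings d y) \<le> max_labellings j d"
  unfolding max_labellings_def by (rule Max_ge) auto

lemma max_labellings_attained: "\<exists>y\<in>reachable j. max_labellings j d = card (labellings d y)"
proof -
  have "Max ((\<lambda>y. card (labellings d y)) ` reachable j) \<in> (\<lambda>y. card (labellings d y)) ` reachable j"
    using reachable_nonempty[of j] by (intro Max_in) auto
  then show ?thesis
    unfolding max_labellings_def by auto
qed

lemma max_labellings_pos: "0 < max_labellings j d"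
  using max_labellings_attained[of j d] card_labellings_pos reachable_subset by fastforce

lemma max_labellings_0: "max_labellings j 0 = 1"
  using max_labellings_attained[of j 0] card_labellings_0 reachable_subset by fastforce

lemma max_labellings_Suc_le: "max_labellings j (Suc d) \<le> (CARD('a) * max_labellings (Suc j) d) ^ m"
proof -
  obtain x where x: "x \<in> reachable j" "max_labellings j (Suc d) = card (labellings (Suc d) x)"
    using max_labellings_attained by blast
  have "x \<in> extendable"
    using x reachable_subset by blast
  have "card (labellings (Suc d) x) \<le> (\<Sum>y\<in>{y \<in> extendable. A x y}. card (labellings d y)) ^ m"
    unfolding card_labellings_Suc[OF \<open>x \<in> extendable\<close>] by (intro power_mono card_UN_le) auto
  also have "\<dots> \<le> (\<Sum>y\<in>{y \<in> extendable. A x y}. max_labellings (Suc j) d) ^ m"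
    using x(1) by (intro power_mono sum_mono max_labellings_ge) auto
  also have "\<dots> \<le> (CARD('a) * max_labellings (Suc j) d) ^ m"
    using card_mono[OF finite subset_UNIV, of "{y \<in> extendable. A x y}"]
    by (intro power_mono mult_right_mono) auto
  finally show ?thesis
    using x by simp
qed

lemma max_labellings_add_le:
  "max_labellings j (d + r) \<le> CARD('a) ^ mpow_sum r * max_labellings (j + r) d ^ (m ^ r)"
proof (induction r arbitrary: j)
  case (Suc r)
  have "max_labellings j (d + Suc r) \<le> (CARD('a) * max_labellings (Suc j) (d + r)) ^ m"
    using max_labellings_Suc_le by simp
  also have "\<dots> \<le> (CARD('a) * (CARD('a) ^ mpow_sum r * max_labellings (Suc j + r) d ^ (m ^ r))) ^ m"
    by (intro power_mono mult_left_mono Suc.IH) auto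
  also have "\<dots> = CARD('a) ^ mpow_sum (Suc r) * max_labellings (j + Suc r) d ^ (m ^ Suc r)"
    by (simp add: power_mult_distrib power_add power_mult[symmetric] mult.commute)
  finally show ?case .
qed simp

lemma max_labellings_le: "max_labellings 0 d \<le> CARD('a) ^ mpow_sum d"
  using max_labellings_add_le[of 0 0 d] by (simp add: max_labellings_0)

text \<open>The decreasing sequence of finite sets \<open>reachable j\<close> becomes constant; from then on every
  reachable symbol has a reachable predecessor, which makes the maximum supermultiplicative.\<close>

lemma reachable_stabilises: "\<exists>r. reachable (Suc r) = reachable r"
proof (rule ccontr)
  assume "\<nexists>r. reachable (Suc r) = reachable r"
  then have "reachable (Suc r) \<subset> reachable r" for r
    using reachable_Suc_subset by blast
  then have "card (reachable r) + r \<le> card (reachable 0)" for r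
  proof (induction r)
    case (Suc r)
    then show ?case
      using psubset_card_mono[OF finite \<open>reachable (Suc r) \<subset> reachable r\<close>] by simp
  qed simp
  from this[of "Suc (card (reachable 0))"] show False
    by simp
qed

definition stable_depth :: nat where
  "stable_depth = (SOME r. reachable (Suc r) = reachable r)"

lemma reachable_stable_depth: "reachable (Suc stable_depth) = reachable stable_depth"
  unfolding stable_depth_def using reachable_stabilises by (rule someI_ex)

definition stable_max :: "nat \<Rightarrow> nat" where
  "stable_max d = max_labellings stable_depth d"

lemma stable_max_pos: "0 < stable_max d"
  unfolding stable_max_def by (rule max_labellings_pos)

lemma stable_max_le: "stable_max d \<le> max_labellings 0 d"
  using max_labellings_attained[of stable_depth d] reachable_subset max_labellings_ge[of _ 0 d]
  unfolding stable_max_def by fastforce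

lemma stable_max_attained_edge:
  "\<exists>x y. x \<in> reachable stable_depth \<and> y \<in> extendable \<and> A x y \<and> stable_max d = card (labellings d y)"
proof -
  obtain y where y: "y \<in> reachable stable_depth" "stable_max d = card (labellings d y)"
    using max_labellings_attained unfolding stable_max_def by blast
  then have "y \<in> reachable (Suc stable_depth)"
    using reachable_stable_depth by simp
  then show ?thesis
    using y by auto
qed

lemma stable_max_power_le: "stable_max d ^ m \<le> stable_max (Suc d)"
proof -
  obtain x y where xy: "x \<in> reachable stable_depth" "y \<in> extendable" "A x y"
    and y: "stable_max d = card (labellings d y)"
    using stable_max_attained_edge by blast
  have "x \<in> extendable"
    using xy(1) reachable_subset by blast
  have "card (labellings d y) \<le> card (\<Union>y\<in>{y \<in> extendable. A x y}. labellings d y)"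
    using xy by (intro card_mono) (auto intro: finite_labellings)
  then have "card (labellings d y) ^ m \<le> card (labellings (Suc d) x)"
    unfolding card_labellings_Suc[OF \<open>x \<in> extendable\<close>] by (rule power_mono) simp
  also have "\<dots> \<le> stable_max (Suc d)"
    unfolding stable_max_def by (rule max_labellings_ge[OF xy(1)])
  finally show ?thesis
    using y by simp
qed

lemma card_forward_patterns_le_max:
  "c < k \<Longrightarrow> card (forward_patterns c d) \<le> CARD('a) * max_labellings 0 d"
  using card_forward_patterns_le[of c d] sum_mono[of extendable "\<lambda>y. card (labellings d y)"
      "\<lambda>_. max_labellings 0 d"] max_labellings_ge[of _ 0 d] card_mono[of UNIV extendable]
  by (fastforce intro: order_trans mult_right_mono)

lemma card_patterns_semiball_ge:
  assumes i: "i < k"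
  shows "stable_max n \<le> card (accepted_patterns k K X (semiball k K [i] n))"
proof -
  obtain x y where xy: "x \<in> reachable stable_depth" "y \<in> extendable" "A x y"
    and y: "stable_max n = card (labellings n y)"
    using stable_max_attained_edge by blast
  let ?pattern = "\<lambda>u. restrict (glued_config x n (\<lambda>_. u)) (semiball k K [i] n)"
  have "?pattern ` labellings n y \<subseteq> accepted_patterns k K X (semiball k K [i] n)"
    using xy by (auto intro!: glued_pattern_accepted)
  moreover have "inj_on ?pattern (labellings n y)"
  proof (rule inj_onI)
    fix u v
    assume "u \<in> labellings n y" "v \<in> labellings n y" and eq: "?pattern u = ?pattern v"
    have "glued_config x n (\<lambda>_. u) (i # word_of_path i z) = glued_config x n (\<lambda>_. v) (i # word_of_path i z)"
      if "z \<in> mtree n" for z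
    proof -
      have "i # word_of_path i z \<in> semiball k K [i] n"
        using that bij_betwE[OF bij_betw_word_of_path[OF i]] unfolding semiball_eq[OF i] by blast
      then show ?thesis
        using fun_cong[OF eq, of "i # word_of_path i z"] by simp
    qed
    then have "(\<lambda>_. u) i = (\<lambda>_. v) i"
      by (rule glued_config_inj[OF i \<open>u \<in> labellings n y\<close> \<open>v \<in> labellings n y\<close>])
    then show "u = v"
      by simp
  qed
  ultimately have "card (labellings n y) \<le> card (accepted_patterns k K X (semiball k K [i] n))"
    by (intro card_inj_on_le finite_accepted_patterns finite_semiball i)
  then show ?thesis
    using y by simp
qed

lemma card_patterns_Delta_ge: "stable_max n ^ k \<le> card (accepted_patterns k K X (Delta k K (Suc n)))"
proof -
  obtain x y where xy: "x \<in> reachable stable_depth" "y \<in> extendable" "A x y"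
    and y: "stable_max n = card (labellings n y)"
    using stable_max_attained_edge by blast
  let ?pattern = "\<lambda>fam. restrict (glued_config x n fam) (Delta k K (Suc n))"
  have "?pattern ` ({..<k} \<rightarrow>\<^sub>E labellings n y) \<subseteq> accepted_patterns k K X (Delta k K (Suc n))"
    using xy by (auto intro!: glued_pattern_accepted)
  moreover have "inj_on ?pattern ({..<k} \<rightarrow>\<^sub>E labellings n y)"
  proof (rule inj_onI)
    fix f g
    assume f: "f \<in> {..<k} \<rightarrow>\<^sub>E labellings n y" and g: "g \<in> {..<k} \<rightarrow>\<^sub>E labellings n y"
      and eq: "?pattern f = ?pattern g"
    show "f = g"
    proof (rule PiE_ext[OF f g])
      fix c
      assume c: "c \<in> {..<k}"
      have "glued_config x n f (c # word_of_path c z) = glued_config x n g (c # word_of_path c z)"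
        if "z \<in> mtree n" for z
      proof -
        have "c # word_of_path c z \<in> Delta k K (Suc n)"
          using that c bij_betwE[OF bij_betw_word_of_path] unfolding Delta_Suc by blast
        then show ?thesis
          using fun_cong[OF eq, of "c # word_of_path c z"] by simp
      qed
      moreover have "f c \<in> labellings n y" "g c \<in> labellings n y"
        using f g c by auto
      ultimately show "f c = g c"
        using c glued_config_inj by blast
    qed
  qed
  moreover have "finite (accepted_patterns k K X (Delta k K (Suc n)))"
    by (simp add: Delta_eq_words_from finite_accepted_patterns finite_words_from)
  ultimately have "card ({..<k} \<rightarrow>\<^sub>E labellings n y) \<le> card (accepted_patterns k K X (Delta k K (Suc n)))"
    by (intro card_inj_on_le)
  then show ?thesis
    using y by (simp add: card_PiE)
qed

lemma card_accepted_patterns_pos: "finite H \<Longrightarrow> 0 < card (accepted_patterns k K X H)"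
proof -
  assume "finite H"
  obtain t where "t \<in> X"
    using X_nonempty unfolding X_def by blast
  then have "restrict (\<lambda>h. t (sgmult K [] h)) H \<in> accepted_patterns k K X H"
    unfolding accepted_patterns_def using sgG_Nil by blast
  then show ?thesis
    using finite_accepted_patterns[OF \<open>finite H\<close>] card_gt_0_iff by blast
qed


end

section \<open>Entropy for branching degree at least two\<close>

locale branching_tree_shift = nonempty_hom_tree_shift +
  assumes m_ge_2: "2 \<le> m"
begin

definition log_growth :: "nat \<Rightarrow> real" where
  "log_growth d = ln (stable_max d) / real m ^ d"

definition tree_entropy :: real where
  "tree_entropy = (SUP d. log_growth d)"

lemma mpow_sum_le: "mpow_sum r + m \<le> m ^ Suc r"
proof (induction r)
  case (Suc r)
  have "mpow_sum (Suc r) + m = m * mpow_sum r + 2 * m"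
    by simp
  also have "\<dots> \<le> m * mpow_sum r + m * m"
    by (rule add_left_mono[OF mult_le_mono1[OF m_ge_2]])
  also have "\<dots> = m * (mpow_sum r + m)"
    by (simp add: algebra_simps)
  also have "\<dots> \<le> m * m ^ Suc r"
    using Suc by simp
  finally show ?case
    by simp
qed simp

lemma ln_stable_max_nonneg: "0 \<le> ln (real (stable_max d))"
  using stable_max_pos[of d] by simp

lemma log_growth_incseq: "incseq log_growth"
proof (rule incseq_SucI)
  fix d
  have "real (stable_max d) ^ m \<le> real (stable_max (Suc d))"
    using stable_max_power_le[of d] by (metis of_nat_le_iff of_nat_power)
  then have "real m * ln (real (stable_max d)) \<le> ln (real (stable_max (Suc d)))"
    using stable_max_pos[of d] by (metis ln_realpow ln_mono of_nat_0_less_iff zero_less_power)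
  then show "log_growth d \<le> log_growth (Suc d)"
    unfolding log_growth_def using m_ge_2 by (simp add: divide_right_mono field_simps)
qed

lemma log_growth_le: "log_growth d \<le> real m * ln (real CARD('a))"
proof -
  have "stable_max d \<le> CARD('a) ^ mpow_sum d"
    using stable_max_le max_labellings_le order_trans by blast
  then have "ln (real (stable_max d)) \<le> ln (real CARD('a) ^ mpow_sum d)"
    using stable_max_pos[of d] by (metis ln_mono of_nat_0_less_iff of_nat_le_iff of_nat_power)
  also have "\<dots> = real (mpow_sum d) * ln (real CARD('a))"
    by (simp add: ln_realpow)
  also have "\<dots> \<le> real m ^ Suc d * ln (real CARD('a))"
  proof (rule mult_right_mono)
    have "mpow_sum d \<le> m ^ Suc d"
      using mpow_sum_le[of d] by linarith
    then show "real (mpow_sum d) \<le> real m ^ Suc d"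
      by (metis of_nat_le_iff of_nat_power)
  qed simp
  finally show ?thesis
    unfolding log_growth_def using m_ge_2 by (simp add: divide_le_eq mult.commute mult.left_commute)
qed

lemma log_growth_tendsto: "log_growth \<longlonglongrightarrow> tree_entropy"
  unfolding tree_entropy_def using log_growth_le log_growth_incseq
  by (intro LIMSEQ_incseq_SUP bdd_aboveI2) auto

lemma log_growth_le_entropy: "log_growth d \<le> tree_entropy"
  using log_growth_incseq log_growth_tendsto by (rule incseq_le)

lemma tree_entropy_nonneg: "0 \<le> tree_entropy"
  using log_growth_le_entropy[of 0] ln_stable_max_nonneg[of 0] by (simp add: log_growth_def)

lemma stable_max_le_exp: "real (stable_max d) \<le> exp (tree_entropy * real m ^ d)"
proof -
  have "ln (real (stable_max d)) \<le> tree_entropy * real m ^ d"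
    using log_growth_le_entropy[of d] m_ge_2 by (simp add: log_growth_def divide_le_eq)
  then show ?thesis
    using stable_max_pos[of d] by (metis exp_le_cancel_iff exp_ln of_nat_0_less_iff)
qed

text \<open>The constant absorbs the first \<open>stable_depth\<close> levels, where labels need not yet be
  confined to the stable set of reachable symbols.\<close>

definition slack :: real where
  "slack = real (1 + mpow_sum stable_depth) * ln (real CARD('a))"

lemma slack_nonneg: "0 \<le> slack"
  by (simp add: slack_def)

lemma exp_slack: "exp slack = real CARD('a) ^ (1 + mpow_sum stable_depth)"
  unfolding slack_def by (subst exp_of_nat_mult) simp

lemma max_labellings_le_stable:
  assumes "stable_depth \<le> d"
  shows "real (max_labellings 0 d) \<le> real CARD('a) ^ mpow_sum stable_depth * exp (tree_entropy * real m ^ d)"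
proof -
  let ?s = stable_depth
  have "max_labellings 0 d \<le> CARD('a) ^ mpow_sum ?s * stable_max (d - ?s) ^ (m ^ ?s)"
    using max_labellings_add_le[of 0 "d - ?s" ?s] assms by (simp add: stable_max_def)
  then have "real (max_labellings 0 d) \<le> real (CARD('a) ^ mpow_sum ?s * stable_max (d - ?s) ^ (m ^ ?s))"
    by (simp only: of_nat_le_iff)
  also have "\<dots> = real CARD('a) ^ mpow_sum ?s * real (stable_max (d - ?s)) ^ (m ^ ?s)"
    by simp
  also have "\<dots> \<le> real CARD('a) ^ mpow_sum ?s * exp (tree_entropy * real m ^ (d - ?s)) ^ (m ^ ?s)"
    using stable_max_le_exp by (intro mult_left_mono power_mono) auto
  also have "exp (tree_entropy * real m ^ (d - ?s)) ^ (m ^ ?s) = exp (tree_entropy * real m ^ d)"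
  proof -
    have "real m ^ ?s * real m ^ (d - ?s) = real m ^ d"
      using assms by (metis le_add_diff_inverse power_add)
    then have "real (m ^ ?s) * (tree_entropy * real m ^ (d - ?s)) = tree_entropy * real m ^ d"
      by (simp add: algebra_simps)
    then show ?thesis
      by (metis exp_of_nat_mult)
  qed
  finally show ?thesis .
qed

lemma max_labellings_le_exp:
  "real (CARD('a) * max_labellings 0 d) \<le> exp (tree_entropy * real m ^ d + slack)"
proof (cases "stable_depth \<le> d")
  case True
  then have "real (CARD('a) * max_labellings 0 d)
      \<le> real CARD('a) * (real CARD('a) ^ mpow_sum stable_depth * exp (tree_entropy * real m ^ d))"
    using max_labellings_le_stable by (simp add: mult_left_mono)
  also have "\<dots> = exp slack * exp (tree_entropy * real m ^ d)"
    by (simp add: exp_slack)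
  finally show ?thesis
    by (simp add: exp_add mult.commute)
next
  case False
  have "CARD('a) ^ mpow_sum d \<le> CARD('a) ^ mpow_sum stable_depth"
    using False by (intro power_increasing mpow_sum_mono) auto
  then have "CARD('a) * max_labellings 0 d \<le> CARD('a) ^ (1 + mpow_sum stable_depth)"
    using max_labellings_le[of d] by simp
  then have "real (CARD('a) * max_labellings 0 d) \<le> real (CARD('a) ^ (1 + mpow_sum stable_depth))"
    by (simp only: of_nat_le_iff)
  also have "\<dots> = exp slack"
    by (simp add: exp_slack)
  also have "\<dots> \<le> exp (tree_entropy * real m ^ d + slack)"
    using tree_entropy_nonneg by simp
  finally show ?thesis .
qed

definition fwd_bound :: "nat \<Rightarrow> real" where
  "fwd_bound d = (if d = 0 then 1 else exp (tree_entropy * real m ^ (d - 1) + slack))"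

definition fwd_ratio :: real where
  "fwd_ratio = exp ((real m - 1) * slack)"

definition pattern_rate :: real where
  "pattern_rate = real (k + 1) * real CARD('a) * fwd_ratio ^ k"

lemma fwd_bound_ge_1: "1 \<le> fwd_bound d"
  using tree_entropy_nonneg slack_nonneg by (simp add: fwd_bound_def)

lemma fwd_ratio_ge_1: "1 \<le> fwd_ratio"
  using slack_nonneg m_ge_2 by (simp add: fwd_ratio_def)

lemma pattern_rate_ge_1: "1 \<le> pattern_rate"
proof -
  have "1 \<le> (k + 1) * CARD('a)"
    by (simp add: Suc_le_eq)
  then have "1 \<le> real ((k + 1) * CARD('a))"
    by (metis of_nat_1 of_nat_le_iff)
  also have "\<dots> \<le> real ((k + 1) * CARD('a)) * fwd_ratio ^ k"
    using mult_left_mono[OF one_le_power[OF fwd_ratio_ge_1, of k], of "real ((k + 1) * CARD('a))"]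
    by simp
  finally show ?thesis
    by (simp add: pattern_rate_def algebra_simps)
qed

lemma card_forward_patterns_le_fwd_bound:
  "c < k \<Longrightarrow> real (card (forward_patterns c d)) \<le> fwd_bound (Suc d)"
proof -
  assume "c < k"
  then have "real (card (forward_patterns c d)) \<le> real (CARD('a) * max_labellings 0 d)"
    using card_forward_patterns_le_max of_nat_le_iff by blast
  also have "\<dots> \<le> fwd_bound (Suc d)"
    using max_labellings_le_exp by (simp add: fwd_bound_def)
  finally show ?thesis .
qed

lemma fwd_bound_power_le: "fwd_bound d ^ m \<le> fwd_ratio * fwd_bound (Suc d)"
proof (cases d)
  case 0
  have "1 * 1 \<le> fwd_ratio * fwd_bound (Suc 0)"
    using fwd_ratio_ge_1 fwd_bound_ge_1 by (intro mult_mono) auto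
  then show ?thesis
    using 0 by (simp add: fwd_bound_def)
next
  case (Suc d')
  have "fwd_bound d ^ m = exp (real m * (tree_entropy * real m ^ d' + slack))"
    using Suc by (simp add: fwd_bound_def exp_of_nat_mult[symmetric])
  also have "real m * (tree_entropy * real m ^ d' + slack)
      = (real m - 1) * slack + (tree_entropy * real m ^ Suc d' + slack)"
    by (simp add: algebra_simps)
  finally show ?thesis
    using Suc by (simp add: fwd_bound_def fwd_ratio_def exp_add)
qed

lemma ln_card_patterns_words_from_le:
  assumes J: "J \<subseteq> {..<k}" and n: "1 \<le> n"
  shows "ln (real (card (accepted_patterns k K X (words_from J n))))
    \<le> real n * ln pattern_rate + ln (real CARD('a)) + real (card J) * (tree_entropy * real m ^ (n - 1) + slack)"
proof -
  have "real (card (accepted_patterns k K X (words_from J n)))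
      \<le> pattern_rate ^ n * real CARD('a) * fwd_bound n ^ card J"
    unfolding pattern_rate_def
    by (rule card_patterns_words_from_le[OF card_forward_patterns_le_fwd_bound fwd_bound_ge_1
          fwd_bound_power_le fwd_ratio_ge_1 J])
  moreover have "0 < card (accepted_patterns k K X (words_from J n))"
    by (rule card_accepted_patterns_pos[OF finite_words_from])
  ultimately have "ln (real (card (accepted_patterns k K X (words_from J n))))
      \<le> ln (pattern_rate ^ n * real CARD('a) * fwd_bound n ^ card J)"
    by (intro ln_mono) auto
  also have "\<dots> = real n * ln pattern_rate + ln (real CARD('a)) +
      real (card J) * (tree_entropy * real m ^ (n - 1) + slack)"
    using pattern_rate_ge_1 n by (simp add: ln_mult ln_realpow fwd_bound_def)
  finally show ?thesis .
qed

lemma semiball_entropy_tendsto: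
  assumes i: "i < k"
  shows "(\<lambda>n. ln (real (card (accepted_patterns k K X (semiball k K [i] n))))
      / real (card (semiball k K [i] n))) \<longlonglongrightarrow> tree_entropy * (real m - 1) / real m"
proof -
  let ?q = "\<lambda>n. real (card (accepted_patterns k K X (semiball k K [i] n)))"
  have q_pos: "0 < ?q n" for n
    using card_accepted_patterns_pos[OF finite_semiball[OF i]] by simp
  have lower: "log_growth n \<le> ln (?q n) / real m ^ n" for n
    using card_patterns_semiball_ge[OF i, of n] stable_max_pos[of n] m_ge_2
    unfolding log_growth_def by (intro divide_right_mono ln_mono) auto
  have upper: "ln (?q n) \<le> tree_entropy * real m ^ n + ln pattern_rate * real n +
      (ln (real CARD('a)) + real m * slack)" if "1 \<le> n" for n
  proof -
    have "ln (?q n) \<le> ln (real (card (accepted_patterns k K X (words_from (children i) n))))"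
      using card_patterns_semiball_le[OF i, of n] q_pos[of n] by (intro ln_mono) auto
    also have "\<dots> \<le> real n * ln pattern_rate + ln (real CARD('a)) +
        real m * (tree_entropy * real m ^ (n - 1) + slack)"
      using ln_card_patterns_words_from_le[OF children_lessThan that, of i] card_children[OF i]
      by simp
    also have "real m * (tree_entropy * real m ^ (n - 1) + slack) = tree_entropy * real m ^ n + real m * slack"
      using that by (simp add: algebra_simps power_eq_if)
    finally show ?thesis
      by (simp add: algebra_simps)
  qed
  have "(\<lambda>n. ln (?q n) / real (card (semiball k K [i] n))) \<longlonglongrightarrow> tree_entropy / (real m / (real m - 1))"
  proof (rule tendsto_ratio_exponential[OF _ log_growth_tendsto lower])
    show "\<forall>\<^sub>F n in sequentially. ln (?q n) \<le> tree_entropy * real m ^ n + ln pattern_rate * real n +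
        (ln (real CARD('a)) + real m * slack)"
      using upper by (rule eventually_sequentiallyI)
    show "(\<lambda>n. real (card (semiball k K [i] n)) / real m ^ n) \<longlonglongrightarrow> real m / (real m - 1)"
      using geometric_sum_over_power[OF m_ge_2] by (simp add: card_semiball[OF i])
  qed (use m_ge_2 in auto)
  then show ?thesis
    using m_ge_2 by (simp add: field_simps)
qed

lemma card_Delta_Suc_over_power:
  "(\<lambda>n. real (card (Delta k K (Suc n))) / real m ^ n) \<longlonglongrightarrow> real k * (real m / (real m - 1))"
proof -
  have "(\<lambda>n. inverse (real m ^ n) + real k * (real (\<Sum>e\<le>n. m ^ e) / real m ^ n))
      \<longlonglongrightarrow> 0 + real k * (real m / (real m - 1))"
    using m_ge_2 by (intro tendsto_intros LIMSEQ_inverse_realpow_zero geometric_sum_over_power) auto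
  moreover have "(\<lambda>n. real (card (Delta k K (Suc n))) / real m ^ n)
      = (\<lambda>n. inverse (real m ^ n) + real k * (real (\<Sum>e\<le>n. m ^ e) / real m ^ n))"
    unfolding card_Delta_Suc by (simp add: add_divide_distrib inverse_eq_divide)
  ultimately show ?thesis
    by (simp only: add_0)
qed

lemma ball_entropy_tendsto:
  "(\<lambda>n. ln (real (card (accepted_patterns k K X (Delta k K n)))) / real (card (Delta k K n)))
     \<longlonglongrightarrow> tree_entropy * (real m - 1) / real m"
proof -
  let ?p = "\<lambda>n. real (card (accepted_patterns k K X (Delta k K n)))"
  have lower: "real k * log_growth n \<le> ln (?p (Suc n)) / real m ^ n" for n
  proof -
    have "real (stable_max n) ^ k \<le> ?p (Suc n)"
      using card_patterns_Delta_ge[of n] by (metis of_nat_le_iff of_nat_power)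
    then have "real k * ln (real (stable_max n)) \<le> ln (?p (Suc n))"
      using stable_max_pos[of n] by (metis ln_mono ln_realpow of_nat_0_less_iff zero_less_power)
    then show ?thesis
      unfolding log_growth_def using m_ge_2 by (simp add: divide_right_mono)
  qed
  have upper: "ln (?p (Suc n)) \<le> real k * tree_entropy * real m ^ n + ln pattern_rate * real n +
      (ln pattern_rate + ln (real CARD('a)) + real k * slack)" for n
    using ln_card_patterns_words_from_le[of "{..<k}" "Suc n"]
    by (simp add: Delta_eq_words_from algebra_simps)
  have "(\<lambda>n. ln (?p (Suc n)) / real (card (Delta k K (Suc n))))
      \<longlonglongrightarrow> (real k * tree_entropy) / (real k * (real m / (real m - 1)))"
  proof (rule tendsto_ratio_exponential[OF _ tendsto_mult_left[OF log_growth_tendsto] lower])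
    show "\<forall>\<^sub>F n in sequentially. ln (?p (Suc n)) \<le> real k * tree_entropy * real m ^ n +
        ln pattern_rate * real n + (ln pattern_rate + ln (real CARD('a)) + real k * slack)"
      using upper by simp
    show "(\<lambda>n. real (card (Delta k K (Suc n))) / real m ^ n) \<longlonglongrightarrow> real k * (real m / (real m - 1))"
      by (rule card_Delta_Suc_over_power)
  qed (use m_ge_2 k_pos in auto)
  moreover have "(real k * tree_entropy) / (real k * (real m / (real m - 1)))
      = tree_entropy * (real m - 1) / real m"
    using m_ge_2 k_pos by (simp add: field_simps)
  ultimately have "(\<lambda>n. ln (?p (Suc n)) / real (card (Delta k K (Suc n))))
      \<longlonglongrightarrow> tree_entropy * (real m - 1) / real m"
    by (simp only:)
  then show ?thesis
    by (rule LIMSEQ_imp_Suc)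
qed


end

section \<open>Entropy for branching degree one\<close>

text \<open>For \<open>m = 1\<close> primitivity forces \<open>k = 1\<close>, so \<open>G\<close> is the free monoid on one generator and the
  shift is a one-sided subshift; its entropy exists by Fekete's lemma.\<close>

locale linear_tree_shift = nonempty_hom_tree_shift +
  assumes k_eq_1: "k = 1"
begin

lemma loop_0: "K 0 0"
proof -
  obtain j where "j \<in> children 0"
    using children_nonempty[OF k_pos] by blast
  then show ?thesis
    unfolding children_def using k_eq_1 by auto
qed

lemma children_0: "children 0 = {0}"
  unfolding children_def using k_eq_1 loop_0 by auto

lemma m_eq_1: "m = 1"
  using card_children[OF k_pos] by (simp add: children_0)

lemma sgG_iff: "h \<in> sgG k K \<longleftrightarrow> set h \<subseteq> {0}"
proof (induction h)
  case (Cons x h)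
  then show ?case
    using k_eq_1 loop_0 by (cases h) (auto simp: sgG_Cons)
qed simp

lemma sgmult_eq_append:
  assumes "g \<in> sgG k K" "h \<in> sgG k K"
  shows "sgmult K g h = g @ h"
proof (rule sgmult_reduced)
  have "g \<noteq> [] \<Longrightarrow> last g = 0" "h \<noteq> [] \<Longrightarrow> hd h = 0"
    using assms by (metis sgG_iff last_in_set hd_in_set singletonD subsetD)+
  then show "g = [] \<or> h = [] \<or> K (last g) (hd h)"
    using loop_0 by (cases "g = []"; cases "h = []") auto
qed

lemma sgmult_assoc_line:
  "g \<in> sgG k K \<Longrightarrow> w \<in> sgG k K \<Longrightarrow> h \<in> sgG k K \<Longrightarrow> sgmult K g (w @ h) = sgmult K (sgmult K g w) h"
  by (simp add: sgmult_eq_append sgG_iff)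

lemma Delta_line: "Delta k K n = {h. set h \<subseteq> {0} \<and> length h \<le> n}"
  by (auto simp: Delta_def sgG_iff)

lemma lessThan_k: "{..<k} = {0}"
  using k_eq_1 by auto

lemma words_from_children_0: "words_from (children 0) n = Delta k K n"
  unfolding children_0 Delta_eq_words_from lessThan_k ..

lemma semiball_line: "semiball k K [0] n = (@) [0] ` Delta k K n"
  unfolding semiball_eq[OF k_pos] words_from_children_0 by auto

lemma Delta_Suc_line: "Delta k K (Suc n) = {[]} \<union> semiball k K [0] n"
  unfolding Delta_Suc semiball_eq[OF k_pos] lessThan_k by simp

lemma Delta_add: "Delta k K (a + b + 1) = Delta k K a \<union> (@) (replicate (a + 1) 0) ` Delta k K b"
proof (rule set_eqI)
  fix h
  show "h \<in> Delta k K (a + b + 1) \<longleftrightarrow> h \<in> Delta k K a \<union> (@) (replicate (a + 1) 0) ` Delta k K b"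
  proof
    assume h: "h \<in> Delta k K (a + b + 1)"
    show "h \<in> Delta k K a \<union> (@) (replicate (a + 1) 0) ` Delta k K b"
    proof (cases "length h \<le> a")
      case False
      have "take (a + 1) h = replicate (a + 1) 0"
        using h False by (intro replicate_eqI) (auto simp: Delta_line dest: in_set_takeD)
      then have "h = replicate (a + 1) 0 @ drop (a + 1) h"
        by (metis append_take_drop_id)
      moreover have "drop (a + 1) h \<in> Delta k K b"
        using h by (auto simp: Delta_line dest: in_set_dropD)
      ultimately show ?thesis
        by (metis UnI2 image_eqI)
    qed (use h in \<open>simp add: Delta_line\<close>)
  qed (auto simp: Delta_line)
qed

lemma card_Delta_line: "card (Delta k K n) = n + 1"
proof (cases n)
  case 0
  have "Delta k K 0 = {[]}"
    by (auto simp: Delta_def)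
  then show ?thesis
    using 0 by simp
next
  case (Suc n')
  then show ?thesis
    using card_Delta_Suc[of n'] k_eq_1 m_eq_1 by simp
qed

lemma card_semiball_line: "card (semiball k K [0] n) = n + 1"
  using card_semiball[of 0 n] k_eq_1 m_eq_1 by simp

abbreviation ball_patterns :: "nat \<Rightarrow> nat" where
  "ball_patterns n \<equiv> card (accepted_patterns k K X (Delta k K n))"

abbreviation semiball_patterns :: "nat \<Rightarrow> nat" where
  "semiball_patterns n \<equiv> card (accepted_patterns k K X (semiball k K [0] n))"

lemma finite_Delta: "finite (Delta k K n)"
  by (simp add: Delta_eq_words_from finite_words_from)

lemma ball_patterns_pos: "0 < ball_patterns n"
  by (rule card_accepted_patterns_pos[OF finite_Delta])

lemma semiball_patterns_pos: "0 < semiball_patterns n"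
  using card_accepted_patterns_pos[OF finite_semiball, of 0] k_eq_1 by simp

lemma ball_patterns_add_le: "ball_patterns (a + b + 1) \<le> ball_patterns a * ball_patterns b"
proof -
  have "card (accepted_patterns k K X ((@) (replicate (a + 1) 0) ` Delta k K b)) \<le> ball_patterns b"
    by (intro card_accepted_patterns_translate_le finite_Delta sgmult_assoc_line)
      (auto simp: sgG_iff Delta_def)
  then show ?thesis
    unfolding Delta_add
    by (meson card_accepted_patterns_Un_le finite_Delta finite_imageI mult_le_mono2 order_trans)
qed

lemma semiball_patterns_le: "semiball_patterns n \<le> ball_patterns n"
  unfolding semiball_line
  by (intro card_accepted_patterns_translate_le finite_Delta sgmult_assoc_line) (auto simp: sgG_iff Delta_def)

lemma ball_patterns_Suc_le: "ball_patterns (Suc n) \<le> CARD('a) * semiball_patterns n"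
proof -
  have "card (accepted_patterns k K X {[]}) \<le> CARD('a)"
    using card_patterns_words_from_0[of "{}"] by (simp add: words_from_0)
  then show ?thesis
    unfolding Delta_Suc_line using finite_semiball[of 0] k_eq_1
    by (meson card_accepted_patterns_Un_le finite.emptyI finite.insertI mult_le_mono1 order_trans
        zero_less_one)
qed

text \<open>Indexing by the number \<open>n\<close> of vertices of the ball makes the logarithm subadditive.\<close>

definition log_patterns :: "nat \<Rightarrow> real" where
  "log_patterns n = (if n = 0 then 0 else ln (real (ball_patterns (n - 1))))"

definition line_entropy :: real where
  "line_entropy = (INF n\<in>{1..}. log_patterns n / real n)"

lemma log_patterns_nonneg: "0 \<le> log_patterns n"
  using ball_patterns_pos[of "n - 1"] by (simp add: log_patterns_def)

lemma log_patterns_subadditive: "log_patterns (a + b) \<le> log_patterns a + log_patterns b"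
proof (cases "a = 0 \<or> b = 0")
  case False
  then have ab: "a + b - 1 = (a - 1) + (b - 1) + 1"
    by arith
  have "real (ball_patterns (a + b - 1)) \<le> real (ball_patterns (a - 1)) * real (ball_patterns (b - 1))"
    unfolding ab by (metis ball_patterns_add_le of_nat_le_iff of_nat_mult)
  then have "ln (real (ball_patterns (a + b - 1))) \<le> ln (real (ball_patterns (a - 1)) * real (ball_patterns (b - 1)))"
    using ball_patterns_pos by (intro ln_mono) auto
  then show ?thesis
    using False ball_patterns_pos[of "a - 1"] ball_patterns_pos[of "b - 1"]
    by (simp add: log_patterns_def ln_mult)
qed (auto simp: log_patterns_nonneg)

lemma ball_entropy_tendsto_line:
  "(\<lambda>n. ln (real (ball_patterns n)) / real (card (Delta k K n))) \<longlonglongrightarrow> line_entropy"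
proof -
  have "(\<lambda>n. log_patterns n / real n) \<longlonglongrightarrow> line_entropy"
    unfolding line_entropy_def by (rule fekete[OF log_patterns_subadditive log_patterns_nonneg])
  then have "(\<lambda>n. log_patterns (Suc n) / real (Suc n)) \<longlonglongrightarrow> line_entropy"
    by (rule LIMSEQ_Suc)
  then show ?thesis
    by (simp add: log_patterns_def card_Delta_line)
qed

lemma semiball_entropy_tendsto_line:
  "(\<lambda>n. ln (real (semiball_patterns n)) / real (card (semiball k K [0] n))) \<longlonglongrightarrow> line_entropy"
proof -
  have upper: "(\<lambda>n. ln (real (ball_patterns n)) / real (n + 1)) \<longlonglongrightarrow> line_entropy"
    using ball_entropy_tendsto_line by (simp add: card_Delta_line)
  have "(\<lambda>n. ln (real (ball_patterns (Suc n))) / real (Suc n + 1) * (real (Suc n + 1) / real (Suc n))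
      - ln (real CARD('a)) / real (Suc n)) \<longlonglongrightarrow> line_entropy * 1 - 0"
    using LIMSEQ_Suc[OF upper] LIMSEQ_Suc[OF LIMSEQ_Suc_n_over_n] LIMSEQ_Suc[OF lim_const_over_n]
    by (intro tendsto_intros) simp_all
  then have lower: "(\<lambda>n. (ln (real (ball_patterns (Suc n))) - ln (real CARD('a))) / real (n + 1))
      \<longlonglongrightarrow> line_entropy"
    by (simp add: diff_divide_distrib)
  have "ln (real (ball_patterns (Suc n))) \<le> ln (real CARD('a)) + ln (real (semiball_patterns n))" for n
  proof -
    have "real (ball_patterns (Suc n)) \<le> real CARD('a) * real (semiball_patterns n)"
      by (metis ball_patterns_Suc_le of_nat_le_iff of_nat_mult)
    then have "ln (real (ball_patterns (Suc n))) \<le> ln (real CARD('a) * real (semiball_patterns n))"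
      using ball_patterns_pos[of "Suc n"] by (intro ln_mono) auto
    then show ?thesis
      using semiball_patterns_pos[of n] by (simp add: ln_mult)
  qed
  then have "\<forall>\<^sub>F n in sequentially. (ln (real (ball_patterns (Suc n))) - ln (real CARD('a))) / real (n + 1)
      \<le> ln (real (semiball_patterns n)) / real (n + 1)"
    by (intro always_eventually allI divide_right_mono) (auto simp: algebra_simps)
  moreover have "\<forall>\<^sub>F n in sequentially. ln (real (semiball_patterns n)) / real (n + 1)
      \<le> ln (real (ball_patterns n)) / real (n + 1)"
    using semiball_patterns_le semiball_patterns_pos
    by (intro always_eventually allI divide_right_mono ln_mono) auto
  ultimately have "(\<lambda>n. ln (real (semiball_patterns n)) / real (n + 1)) \<longlonglongrightarrow> line_entropy"
    by (rule tendsto_sandwich[OF _ _ lower upper])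
  then show ?thesis
    by (simp add: card_semiball_line)
qed


end

lemma (in hom_tree_shift) entropy_limits_agree:
  assumes prim: "primitive_mat k K" and i: "i < k"
  shows "\<exists>L. (\<lambda>n. ln (real (pn k K X n)) / real (card (Delta k K n))) \<longlonglongrightarrow> L \<and>
    (\<lambda>n. ln (real (pn_semi k K X [i] n)) / real (card (semiball k K [i] n))) \<longlonglongrightarrow> L"
proof (cases "X = {}")
  case True
  then show ?thesis
    by (simp add: pn_def pn_semi_def accepted_patterns_def) (rule exI, rule tendsto_const)
next
  case False
  then interpret nonempty_hom_tree_shift k K m A
    by unfold_locales (simp add: X_def)
  show ?thesis
  proof (cases "m = 1")
    case True
    then have "k = 1"
      using primitive_row_sum_one[OF prim] row_sum k_pos by simp
    then interpret linear_tree_shift k K m A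
      by unfold_locales
    show ?thesis
      using ball_entropy_tendsto_line semiball_entropy_tendsto_line i \<open>k = 1\<close>
      by (auto simp: pn_def pn_semi_def)
  next
    case False
    then interpret branching_tree_shift k K m A
      using m_pos by unfold_locales simp
    show ?thesis
      using ball_entropy_tendsto semiball_entropy_tendsto[OF i] by (auto simp: pn_def pn_semi_def)
  qed
qed

theorem theorem4p3:
  fixes k :: nat and K :: "nat \<Rightarrow> nat \<Rightarrow> bool" and m :: nat
    and A :: "nat \<Rightarrow> 'a::finite \<Rightarrow> 'a \<Rightarrow> bool"
  assumes prim: "primitive_mat k K"
    and rowsum: "\<forall>i<k. card {j. j < k \<and> K i j} = m"
    and hom: "\<forall>i<k. A i = A 0"
  shows "\<forall>i<k.
     (\<lambda>n. ereal (ln (real (pn k K (markov_tree_shift k K A) n))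
                  / real (card (Delta k K n))))
       \<longlonglongrightarrow> stem_entropy k K (markov_tree_shift k K A) [i]"
proof (intro allI impI)
  fix i
  assume i: "i < k"
  then have "0 < k" and "0 < m"
    using primitive_row_sum_pos[OF prim rowsum] by auto
  interpret hom_tree_shift k K m "A 0"
    using \<open>0 < k\<close> \<open>0 < m\<close> rowsum by unfold_locales auto
  obtain L where "(\<lambda>n. ln (real (pn k K X n)) / real (card (Delta k K n))) \<longlonglongrightarrow> L"
    and "(\<lambda>n. ln (real (pn_semi k K X [i] n)) / real (card (semiball k K [i] n))) \<longlonglongrightarrow> L"
    using entropy_limits_agree[OF prim i] by blast
  then show "(\<lambda>n. ereal (ln (real (pn k K (markov_tree_shift k K A) n)) / real (card (Delta k K n))))
      \<longlonglongrightarrow> stem_entropy k K (markov_tree_shift k K A) [i]"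
    unfolding X_def markov_tree_shift_hom[OF hom] stem_entropy_def
    by (rule tendsto_imp_limsup_eq)
qed

end
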